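(* Let $k$ be an algebraically closed field of characteristic zero, let $p(z)\in k[z]$ be a polynomial of degree $2$ with simple roots, and let $D_p\subset\mathbb{A}^3$ be the surface $xy=p(z)$. Then the bracket width of the simple Lie algebra $\mathrm{Lie}_{\mathrm{LND}}(D_p)$ is at most two.
   Context: $\mathrm{Lie}_{\mathrm{LND}}(D_p)$ denotes the Lie subalgebra of $\mathrm{Vec}(D_p)$ generated by all locally nilpotent vector fields (vector fields whose associated $k$-derivation $\partial$ of $\mathcal{O}(D_p)$ satisfies: each $f$ is killed by some power of $\partial$). The bracket width of a Lie algebra $L$ is the supremum over $a\in[L,L]$ of the smallest number $m$ such that $a$ is a sum of $m$ brackets of elements of $L$. *)

theory Defs
  imports "HOL-Computational_Algebra.Polynomial"
begin

definition alg_closed :: "('a::field) itself \<Rightarrow> bool" where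
  "alg_closed _ \<longleftrightarrow> (\<forall>q :: 'a poly. degree q \<ge> 1 \<longrightarrow> (\<exists>x. poly q x = 0))"

inductive_set poly_fun3 :: "('a::comm_ring_1 \<times> 'a \<times> 'a \<Rightarrow> 'a) set" where
  pf_const: "(\<lambda>_. c) \<in> poly_fun3"
| pf_x: "(\<lambda>(x, y, z). x) \<in> poly_fun3"
| pf_y: "(\<lambda>(x, y, z). y) \<in> poly_fun3"
| pf_z: "(\<lambda>(x, y, z). z) \<in> poly_fun3"
| pf_add: "f \<in> poly_fun3 \<Longrightarrow> g \<in> poly_fun3 \<Longrightarrow> (\<lambda>v. f v + g v) \<in> poly_fun3"
| pf_mult: "f \<in> poly_fun3 \<Longrightarrow> g \<in> poly_fun3 \<Longrightarrow> (\<lambda>v. f v * g v) \<in> poly_fun3"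

definition surf :: "'a::field poly \<Rightarrow> ('a \<times> 'a \<times> 'a) set" where
  "surf p = {(x, y, z). x * y = poly p z}"

text \<open>Coordinate ring O(D_p): restrictions of polynomial functions to D_p,
  extended by 0 off D_p (over an algebraically closed field the reduced
  irreducible surface is determined by its points).\<close>
definition coord_ring :: "'a::field poly \<Rightarrow> ('a \<times> 'a \<times> 'a \<Rightarrow> 'a) set" where
  "coord_ring p = {(\<lambda>v. if v \<in> surf p then f v else 0) | f. f \<in> poly_fun3}"

type_synonym 'a vfield = "('a \<times> 'a \<times> 'a \<Rightarrow> 'a) \<Rightarrow> ('a \<times> 'a \<times> 'a \<Rightarrow> 'a)"

text \<open>k-derivations of O(D_p) (= algebraic vector fields on D_p); normalised
  to be zero on functions outside O(D_p), so that equality of vector fields is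
  equality of HOL functions.\<close>
definition is_vfield :: "'a::field poly \<Rightarrow> 'a vfield \<Rightarrow> bool" where
  "is_vfield p D \<longleftrightarrow>
     (\<forall>f \<in> coord_ring p. D f \<in> coord_ring p)
   \<and> (\<forall>f. f \<notin> coord_ring p \<longrightarrow> D f = (\<lambda>_. 0))
   \<and> (\<forall>f \<in> coord_ring p. \<forall>g \<in> coord_ring p. D (\<lambda>v. f v + g v) = (\<lambda>v. D f v + D g v))
   \<and> (\<forall>c. \<forall>f \<in> coord_ring p. D (\<lambda>v. c * f v) = (\<lambda>v. c * D f v))
   \<and> (\<forall>f \<in> coord_ring p. \<forall>g \<in> coord_ring p.
        D (\<lambda>v. f v * g v) = (\<lambda>v. f v * D g v + g v * D f v))"

definition vf_zero :: "'a::field vfield" where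
  "vf_zero = (\<lambda>f v. 0)"

definition vf_add :: "'a::field vfield \<Rightarrow> 'a vfield \<Rightarrow> 'a vfield" where
  "vf_add D E = (\<lambda>f v. D f v + E f v)"

definition vf_smult :: "'a::field \<Rightarrow> 'a vfield \<Rightarrow> 'a vfield" where
  "vf_smult c D = (\<lambda>f v. c * D f v)"

definition vf_bracket :: "'a::field vfield \<Rightarrow> 'a vfield \<Rightarrow> 'a vfield" where
  "vf_bracket D E = (\<lambda>f v. D (E f) v - E (D f) v)"

definition is_lnd :: "'a::field poly \<Rightarrow> 'a vfield \<Rightarrow> bool" where
  "is_lnd p D \<longleftrightarrow> is_vfield p D \<and>
     (\<forall>f \<in> coord_ring p. \<exists>n. (D ^^ n) f = (\<lambda>_. 0))"

inductive_set lie_lnd :: "'a::field poly \<Rightarrow> 'a vfield set" for p where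
  ll_gen: "is_lnd p D \<Longrightarrow> D \<in> lie_lnd p"
| ll_zero: "vf_zero \<in> lie_lnd p"
| ll_add: "D \<in> lie_lnd p \<Longrightarrow> E \<in> lie_lnd p \<Longrightarrow> vf_add D E \<in> lie_lnd p"
| ll_smult: "D \<in> lie_lnd p \<Longrightarrow> vf_smult c D \<in> lie_lnd p"
| ll_bracket: "D \<in> lie_lnd p \<Longrightarrow> E \<in> lie_lnd p \<Longrightarrow> vf_bracket D E \<in> lie_lnd p"

inductive_set derived :: "'a::field vfield set \<Rightarrow> 'a vfield set" for L where
  der_br: "D \<in> L \<Longrightarrow> E \<in> L \<Longrightarrow> vf_bracket D E \<in> derived L"
| der_zero: "vf_zero \<in> derived L"
| der_add: "D \<in> derived L \<Longrightarrow> E \<in> derived L \<Longrightarrow> vf_add D E \<in> derived L"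
| der_smult: "D \<in> derived L \<Longrightarrow> vf_smult c D \<in> derived L"

text \<open>Bracket width at most m: every element of [L,L] is a sum of m brackets
  of elements of L (fewer brackets are covered since [0,0] = 0 and 0 \<in> L).\<close>
definition bracket_width_le :: "'a::field vfield set \<Rightarrow> nat \<Rightarrow> bool" where
  "bracket_width_le L m \<longleftrightarrow>
     (\<forall>a \<in> derived L. \<exists>B C. (\<forall>i<m. B i \<in> L \<and> C i \<in> L) \<and>
        a = foldr (\<lambda>i acc. vf_add (vf_bracket (B i) (C i)) acc) [0..<m] vf_zero)"

end

theory Submission
  imports Defs "HOL-Library.Poly_Mapping"
begin

text \<open>On the chart \<open>x \<noteq> 0\<close> the coordinate ring of \<open>D\<^sub>p\<close> becomes the subring of
  \<open>k[t, t\<inverse>][z]\<close> generated by \<open>t\<close>, \<open>p(z)/t\<close> and \<open>z\<close>, and vector fields become derivations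
  \<open>\<alpha> \<partial>\<^sub>z + \<beta> t\<partial>\<^sub>t\<close> of it. A locally nilpotent derivation has divergence zero with respect to
  the volume form \<open>dt/t \<and> dz\<close>, and the bracket of two divergence free fields is the Hamiltonian
  field \<open>H\<^sub>h = {h, -}\<close> of a function \<open>h\<close>; so the derived algebra consists of Hamiltonian fields.
  Conversely \<open>H\<^sub>h\<close> is locally nilpotent for \<open>h = x\<^sup>k, y\<^sup>k\<close>, and brackets of these produce every
  Hamiltonian field. Finally every \<open>h\<close> can be written as \<open>{z, g} + {-x, y q(z)} + c\<close>: the first
  term inverts \<open>t\<partial>\<^sub>t\<close> away from \<open>t\<^sup>0\<close>, and \<open>{-x, y q} = (p q)'\<close> reaches every polynomial in
  \<open>z\<close> up to a constant. Hence \<open>H\<^sub>h = [H\<^sub>z, H\<^sub>g] + [H\<^bsub>-x\<^esub>, H\<^bsub>y q\<^esub>]\<close>.\<close>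

section \<open>Laurent polynomials in t with coefficients in k[z]\<close>

lemma poly_mapping_induct_single [case_names zero add]:
  assumes "P 0"
    and "\<And>f a b. a \<notin> Poly_Mapping.keys f \<Longrightarrow> b \<noteq> 0 \<Longrightarrow> P f \<Longrightarrow> P (f + Poly_Mapping.single a b)"
  shows "P (f :: 'c \<Rightarrow>\<^sub>0 'b::monoid_add)"
proof (induct f rule: update_induct)
  case const
  then show ?case using assms(1) by simp
next
  case (update f a b)
  have "Poly_Mapping.update a b f = f + Poly_Mapping.single a b"
  proof (rule poly_mapping_eqI)
    fix k
    have "Poly_Mapping.lookup f a = 0" using update(1) by (simp add: in_keys_iff)
    then show "Poly_Mapping.lookup (Poly_Mapping.update a b f) k =
        Poly_Mapping.lookup (f + Poly_Mapping.single a b) k"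
      by (auto simp: lookup_update lookup_add lookup_single when_def)
  qed
  then show ?case using update assms(2) by simp
qed

lemma biadditive_eq_from_singles:
  fixes B1 B2 :: "('c \<Rightarrow>\<^sub>0 'b::monoid_add) \<Rightarrow> ('c \<Rightarrow>\<^sub>0 'b) \<Rightarrow> 'd::ab_group_add"
  assumes "\<And>f1 f2 g. B1 (f1 + f2) g = B1 f1 g + B1 f2 g"
    and "\<And>f g1 g2. B1 f (g1 + g2) = B1 f g1 + B1 f g2"
    and "\<And>f1 f2 g. B2 (f1 + f2) g = B2 f1 g + B2 f2 g"
    and "\<And>f g1 g2. B2 f (g1 + g2) = B2 f g1 + B2 f g2"
    and "\<And>a b c d. B1 (Poly_Mapping.single a b) (Poly_Mapping.single c d) =
                   B2 (Poly_Mapping.single a b) (Poly_Mapping.single c d)"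
  shows "B1 f g = B2 f g"
proof -
  have zero: "B1 0 g = 0" "B2 0 g = 0" "B1 f 0 = 0" "B2 f 0 = 0" for f g
    using assms(1)[of 0 0 g] assms(2)[of f 0 0] assms(3)[of 0 0 g] assms(4)[of f 0 0] by simp_all
  have "B1 (Poly_Mapping.single a b) g = B2 (Poly_Mapping.single a b) g" for a b
    by (induct g rule: poly_mapping_induct_single) (simp_all add: zero assms(2,4,5))
  then show ?thesis
    by (induct f rule: poly_mapping_induct_single) (simp_all add: zero assms(1,3))
qed

type_synonym 'a lpoly = "int \<Rightarrow>\<^sub>0 'a poly"

abbreviation tcoeff :: "'a::zero lpoly \<Rightarrow> int \<Rightarrow> 'a poly"
  where "tcoeff \<equiv> Poly_Mapping.lookup"

abbreviation tmonom :: "int \<Rightarrow> 'a::zero poly \<Rightarrow> 'a lpoly"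
  where "tmonom \<equiv> Poly_Mapping.single"

definition zpoly :: "'a::zero poly \<Rightarrow> 'a lpoly" where
  "zpoly q = tmonom 0 q"

definition tvar :: "'a::idom lpoly" where
  "tvar = tmonom 1 1"

definition tinv :: "'a::idom lpoly" where
  "tinv = tmonom (-1) 1"

definition zvar :: "'a::idom lpoly" where
  "zvar = zpoly [:0, 1:]"

definition euler :: "'a::idom lpoly \<Rightarrow> 'a lpoly" where
  "euler f = Abs_poly_mapping (\<lambda>n. of_int n * tcoeff f n)"

definition zderiv :: "'a::idom lpoly \<Rightarrow> 'a lpoly" where
  "zderiv f = Abs_poly_mapping (\<lambda>n. pderiv (tcoeff f n))"

lemma tcoeff_euler: "tcoeff (euler f) n = of_int n * tcoeff f n"
proof -
  have "finite {n. of_int n * tcoeff f n \<noteq> 0}"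
    by (rule finite_subset[OF _ finite_keys[of f]]) (auto simp: in_keys_iff)
  then show ?thesis unfolding euler_def by simp
qed

lemma tcoeff_zderiv: "tcoeff (zderiv f) n = pderiv (tcoeff f n)"
proof -
  have "finite {n. pderiv (tcoeff f n) \<noteq> 0}"
    by (rule finite_subset[OF _ finite_keys[of f]]) (auto simp: in_keys_iff)
  then show ?thesis unfolding zderiv_def by simp
qed

lemma euler_add: "euler (f + g) = euler f + euler g"
  by (rule poly_mapping_eqI) (simp add: tcoeff_euler lookup_add algebra_simps)

lemma zderiv_add: "zderiv (f + g) = zderiv f + zderiv g"
  by (rule poly_mapping_eqI) (simp add: tcoeff_zderiv lookup_add pderiv_add)

lemma euler_uminus: "euler (- f) = - euler f"
  by (rule poly_mapping_eqI) (simp add: tcoeff_euler)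

lemma zderiv_uminus: "zderiv (- f) = - zderiv f"
  by (rule poly_mapping_eqI) (simp add: tcoeff_zderiv pderiv_minus)

lemma euler_diff: "euler (f - g) = euler f - euler g"
  using euler_add[of "f - g" g] by simp

lemma zderiv_diff: "zderiv (f - g) = zderiv f - zderiv g"
  using zderiv_add[of "f - g" g] by simp

lemma euler_tmonom: "euler (tmonom a b) = tmonom a (of_int a * b)"
  by (rule poly_mapping_eqI) (simp add: tcoeff_euler lookup_single when_def)

lemma zderiv_tmonom: "zderiv (tmonom a b) = tmonom a (pderiv b)"
  by (rule poly_mapping_eqI) (simp add: tcoeff_zderiv lookup_single when_def)

lemma euler_0 [simp]: "euler 0 = 0"
  by (rule poly_mapping_eqI) (simp add: tcoeff_euler)

lemma zderiv_0 [simp]: "zderiv 0 = 0"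
  by (rule poly_mapping_eqI) (simp add: tcoeff_zderiv)

lemma leibniz_from_singles:
  fixes D :: "'a::idom lpoly \<Rightarrow> 'a lpoly"
  assumes add: "\<And>f g. D (f + g) = D f + D g"
    and single: "\<And>a b c d. D (tmonom a b * tmonom c d) = D (tmonom a b) * tmonom c d + tmonom a b * D (tmonom c d)"
  shows "D (f * g) = D f * g + f * D g"
  by (rule biadditive_eq_from_singles[of "\<lambda>f g. D (f * g)" "\<lambda>f g. D f * g + f * D g"])
     (simp_all add: add single algebra_simps)

lemma euler_mult: "euler (f * g) = euler f * g + f * euler g"
  by (rule leibniz_from_singles)
     (simp_all add: euler_add euler_tmonom mult_single algebra_simps flip: single_add)

lemma zderiv_mult: "zderiv (f * g) = zderiv f * g + f * zderiv g"
  by (rule leibniz_from_singles)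
     (simp_all add: zderiv_add zderiv_tmonom mult_single pderiv_mult algebra_simps flip: single_add)

lemma euler_zderiv: "euler (zderiv f) = zderiv (euler f)"
  by (rule poly_mapping_eqI) (simp add: tcoeff_euler tcoeff_zderiv pderiv_smult of_int_poly)

lemma zpoly_add: "zpoly (q + r) = zpoly q + zpoly r"
  by (simp add: zpoly_def single_add)

lemma zpoly_mult: "zpoly (q * r) = zpoly q * zpoly r"
  by (simp add: zpoly_def mult_single)

lemma zpoly_uminus: "zpoly (- q) = - zpoly q"
  by (simp add: zpoly_def single_uminus)

lemma zpoly_diff: "zpoly (q - r) = zpoly q - zpoly r"
  by (simp add: zpoly_def single_diff)

lemma zpoly_0 [simp]: "zpoly 0 = 0"
  by (simp add: zpoly_def)

lemma zpoly_1 [simp]: "zpoly 1 = 1" "zpoly [:1:] = 1"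
  unfolding zpoly_def by (simp_all only: single_one flip: one_pCons)

lemma zpoly_minus_1_mult: "zpoly [:-1:] * h = - (h :: 'a::idom lpoly)"
proof -
  have "[:-1:] = - (1 :: 'a poly)"
    by (simp add: one_pCons)
  then show ?thesis
    using zpoly_uminus[of "1 :: 'a poly"] by simp
qed

lemma zpoly_mult_tmonom: "zpoly q * tmonom a b = tmonom a (q * b)"
  by (simp add: zpoly_def mult_single)

lemma zpoly_pCons: "zpoly (pCons c q) = zpoly [:c:] + zvar * zpoly q"
proof -
  have "pCons c q = [:c:] + [:0, 1:] * q" by simp
  then show ?thesis by (metis zpoly_add zpoly_mult zvar_def)
qed

lemma euler_zpoly [simp]: "euler (zpoly q) = 0"
  by (simp add: zpoly_def euler_tmonom)

lemma zderiv_zpoly: "zderiv (zpoly q) = zpoly (pderiv q)"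
  by (simp add: zpoly_def zderiv_tmonom)

lemma tvar_tinv: "tvar * tinv = 1"
  by (simp add: tvar_def tinv_def mult_single)

lemma tinv_tvar: "tinv * tvar = 1"
  by (simp add: tvar_def tinv_def mult_single)

lemma tvar_power: "tvar ^ n = tmonom (int n) 1"
  by (induct n) (simp_all add: tvar_def mult_single add.commute)

lemma tvar_nonzero: "tvar \<noteq> 0"
  by (metis tvar_def lookup_single_eq lookup_zero one_neq_zero)

lemma euler_tvar [simp]: "euler tvar = tvar"
  by (simp add: tvar_def euler_tmonom)

lemma zderiv_tvar [simp]: "zderiv tvar = 0"
  by (simp add: tvar_def zderiv_tmonom)

lemma zderiv_tvar_power [simp]: "zderiv (tvar ^ n) = 0"
  by (simp add: tvar_power zderiv_tmonom)

lemma euler_1 [simp]: "euler 1 = 0"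
  using euler_zpoly[of 1] by simp

lemma zderiv_1 [simp]: "zderiv 1 = 0"
  using zderiv_zpoly[of 1] by simp

lemma zpoly_of_nat: "zpoly [:of_nat n:] = of_nat n"
  by (metis zpoly_def of_nat_poly single_of_nat)

lemma euler_zvar [simp]: "euler zvar = 0"
  by (simp add: zvar_def)

lemma zderiv_zvar [simp]: "zderiv zvar = 1"
  by (simp add: zvar_def zderiv_zpoly pderiv_pCons flip: one_pCons)

text \<open>The Poisson bracket of the volume form \<open>dt/t \<and> dz\<close>, which on the chart \<open>x = t\<close>,
  \<open>y = p(z)/t\<close> of \<open>D\<^sub>p\<close> is the standard volume form \<open>dx \<and> dz / x\<close> of the surface.\<close>

definition poisson :: "'a::idom lpoly \<Rightarrow> 'a lpoly \<Rightarrow> 'a lpoly" where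
  "poisson f g = zderiv f * euler g - euler f * zderiv g"

lemma poisson_add_left: "poisson (f + g) h = poisson f h + poisson g h"
  by (simp add: poisson_def zderiv_add euler_add algebra_simps)

lemma poisson_add_right: "poisson h (f + g) = poisson h f + poisson h g"
  by (simp add: poisson_def zderiv_add euler_add algebra_simps)

lemma poisson_uminus_left: "poisson (- f) h = - poisson f h"
  by (simp add: poisson_def zderiv_uminus euler_uminus algebra_simps)

lemma poisson_0 [simp]: "poisson 0 f = 0" "poisson f 0 = 0"
  by (simp_all add: poisson_def)

lemma poisson_mult_left: "poisson (g * h) f = poisson g f * h + g * poisson h f"
  by (simp add: poisson_def zderiv_mult euler_mult algebra_simps)

lemma poisson_mult_right: "poisson f (g * h) = poisson f g * h + g * poisson f h"
  by (simp add: poisson_def zderiv_mult euler_mult algebra_simps)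

lemma poisson_jacobi: "poisson f (poisson g h) = poisson (poisson f g) h + poisson g (poisson f h)"
  by (simp add: poisson_def zderiv_mult euler_mult zderiv_diff euler_diff euler_zderiv algebra_simps)

lemma poisson_zpoly_left: "poisson (zpoly q) h = zpoly (pderiv q) * euler h"
  by (simp add: poisson_def zderiv_zpoly)

lemma poisson_power_left: "poisson (f ^ Suc k) g = of_nat (Suc k) * f ^ k * poisson f g"
  by (induct k) (simp_all add: poisson_mult_left algebra_simps)

lemma poly_eq_0_if_vanishes_off_0:
  fixes q :: "'a::field_char_0 poly"
  assumes "\<And>s. s \<noteq> 0 \<Longrightarrow> poly q s = 0"
  shows "q = 0"
proof -
  have "infinite (UNIV - {0 :: 'a})"
    by (simp add: infinite_UNIV_char_0)
  moreover have "UNIV - {0} \<subseteq> {s. poly q s = 0}"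
    using assms by auto
  ultimately show ?thesis
    using poly_roots_finite finite_subset by blast
qed

lemma laurent_sum_vanishes_imp_coeff_0:
  fixes c :: "int \<Rightarrow> 'a::field_char_0"
  assumes K: "finite K" "n \<in> K" and vanish: "\<And>t. t \<noteq> 0 \<Longrightarrow> (\<Sum>m\<in>K. t powi m * c m) = 0"
  shows "c n = 0"
proof -
  define N where "N = (\<Sum>m\<in>K. \<bar>m\<bar>)"
  have shift_nonneg: "m + N \<ge> 0" if "m \<in> K" for m
    using member_le_sum[of m K abs] K(1) that by (simp add: N_def)
  have inj: "inj_on (\<lambda>m. nat (m + N)) K"
    by (rule inj_onI) (metis add_right_cancel nat_eq_iff2 shift_nonneg)
  \<comment> \<open>Multiplying by \<open>t\<^sup>N\<close> turns the Laurent sum into an honest polynomial.\<close>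
  define q where "q = (\<Sum>m\<in>K. monom (c m) (nat (m + N)))"
  have "poly q t = 0" if "t \<noteq> 0" for t
  proof -
    have "poly q t = (\<Sum>m\<in>K. t powi N * (t powi m * c m))"
      unfolding q_def poly_sum poly_monom
    proof (rule sum.cong[OF refl])
      fix m assume "m \<in> K"
      then have "t ^ nat (m + N) = t powi (m + N)"
        using shift_nonneg by (metis power_int_of_nat int_nat_eq)
      then show "c m * t ^ nat (m + N) = t powi N * (t powi m * c m)"
        using \<open>t \<noteq> 0\<close> by (simp add: power_int_add)
    qed
    then show ?thesis
      using vanish[OF that] by (simp flip: sum_distrib_left)
  qed
  then have "q = 0"
    by (rule poly_eq_0_if_vanishes_off_0)
  moreover have "coeff q (nat (n + N)) = c n"
  proof -
    have "coeff q (nat (n + N)) = (\<Sum>m\<in>K. if m = n then c m else 0)"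
      unfolding q_def coeff_sum coeff_monom
      by (rule sum.cong[OF refl]) (use inj K in \<open>auto dest: inj_onD\<close>)
    then show ?thesis using K by simp
  qed
  ultimately show ?thesis by simp
qed

definition leval :: "'a::field lpoly \<Rightarrow> 'a \<Rightarrow> 'a \<Rightarrow> 'a" where
  "leval f t z = (\<Sum>n\<in>Poly_Mapping.keys f. t powi n * poly (tcoeff f n) z)"

lemma leval_superset:
  assumes "finite A" "Poly_Mapping.keys f \<subseteq> A"
  shows "leval f t z = (\<Sum>n\<in>A. t powi n * poly (tcoeff f n) z)"
  unfolding leval_def
  by (rule sum.mono_neutral_left) (use assms in \<open>auto simp: in_keys_iff\<close>)

lemma leval_add: "leval (f + g) t z = leval f t z + leval g t z"
  using keys_add[of f g]
  by (simp add: leval_superset[of "Poly_Mapping.keys f \<union> Poly_Mapping.keys g"]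
      lookup_add distrib_left sum.distrib)

lemma leval_0 [simp]: "leval 0 t z = 0"
  by (simp add: leval_def)

lemma leval_diff: "leval (f - g) t z = leval f t z - leval g t z"
  using leval_add[of "f - g" g t z] by simp

lemma leval_tmonom: "leval (tmonom a b) t z = t powi a * poly b z"
  by (simp add: leval_def)

lemma leval_mult: "t \<noteq> 0 \<Longrightarrow> leval (f * g) t z = leval f t z * leval g t z"
  by (rule biadditive_eq_from_singles[of "\<lambda>f g. leval (f * g) t z" "\<lambda>f g. leval f t z * leval g t z"])
     (simp_all add: leval_add distrib_left distrib_right mult_single leval_tmonom power_int_add)

lemma leval_zpoly: "leval (zpoly q) t z = poly q z"
  by (simp add: zpoly_def leval_tmonom)

lemma leval_tvar: "leval tvar t z = t"
  by (simp add: tvar_def leval_tmonom)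

lemma leval_zvar: "leval zvar t z = z"
  by (simp add: zvar_def leval_zpoly)

lemma lpoly_eq_0_if_leval_vanishes:
  fixes f :: "'a::field_char_0 lpoly"
  assumes "\<And>t z. t \<noteq> 0 \<Longrightarrow> leval f t z = 0"
  shows "f = 0"
proof (rule poly_mapping_eqI)
  fix n
  have "poly (tcoeff f n) z = 0" if "n \<in> Poly_Mapping.keys f" for z
    using laurent_sum_vanishes_imp_coeff_0[OF finite_keys that, of "\<lambda>m. poly (tcoeff f m) z"]
      assms by (simp add: leval_def)
  then show "tcoeff f n = tcoeff 0 n"
    by (metis in_keys_iff lookup_zero poly_all_0_iff_0)
qed


section \<open>The Laurent model of the coordinate ring\<close>

locale quadratic_surface =
  fixes p :: "'a::field_char_0 poly"
  assumes degree_p: "degree p = 2" and rsquarefree_p: "rsquarefree p"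
begin

definition "c0 = coeff p 0"
definition "c1 = coeff p 1"
definition "c2 = coeff p 2"
definition "disc = c1 * c1 - 4 * c2 * c0"

lemma p_nonzero: "p \<noteq> 0"
  using degree_p by auto

lemma c2_nonzero: "c2 \<noteq> 0"
  using p_nonzero degree_p unfolding c2_def by (metis leading_coeff_0_iff)

lemma p_eq: "p = [:c0, c1, c2:]"
proof (rule poly_eqI)
  fix n
  show "coeff p n = coeff [:c0, c1, c2:] n"
  proof (cases "n \<le> 2")
    case True
    then have "n = 0 \<or> n = 1 \<or> n = 2" by auto
    then show ?thesis by (auto simp: c0_def c1_def c2_def numeral_2_eq_2)
  next
    case False
    then show ?thesis
      using degree_p by (auto simp: coeff_eq_0 coeff_pCons split: nat.splits)
  qed
qed

lemma pderiv_p: "pderiv p = [:c1, 2 * c2:]"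
  by (subst p_eq) (simp add: pderiv_pCons)

lemma pderiv_pderiv_pderiv_p: "pderiv (pderiv (pderiv p)) = 0"
  by (simp add: pderiv_p pderiv_pCons)

lemma poly_p_shift: "poly p (z + w) = poly p z + poly (pderiv p) z * w + c2 * w * w"
  by (subst (1 2) p_eq) (simp add: pderiv_p algebra_simps)

lemma disc_identity: "pderiv p * pderiv p - smult (4 * c2) p = [:disc:]"
  by (simp add: pderiv_p, subst p_eq) (simp add: disc_def algebra_simps)

lemma disc_nonzero: "disc \<noteq> 0"
proof
  assume disc: "disc = 0"
  define r where "r = - c1 / (2 * c2)"
  have root': "poly (pderiv p) r = 0"
    using c2_nonzero by (simp add: pderiv_p r_def)
  have "poly (pderiv p * pderiv p - smult (4 * c2) p) r = 0"
    by (simp add: disc_identity disc)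
  then have "poly p r = 0"
    using root' c2_nonzero by simp
  then show False
    using root' rsquarefree_p by (auto simp: rsquarefree_roots)
qed

definition yvar :: "'a lpoly" where
  "yvar = tmonom (-1) p"

text \<open>On the chart \<open>x \<noteq> 0\<close> of \<open>D\<^sub>p\<close> we have \<open>x = t\<close>, \<open>y = p(z)/t\<close>, so \<open>O(D\<^sub>p)\<close> becomes the
  subring of \<open>k[t, t\<inverse>][z]\<close> generated by \<open>t\<close>, \<open>p(z)/t\<close> and \<open>z\<close>: the Laurent polynomials
  whose coefficient of \<open>t\<^sup>-\<^sup>n\<close> is divisible by \<open>p\<^sup>n\<close>.\<close>

definition model :: "'a lpoly set" where
  "model = {f. \<forall>n. p ^ nat (- n) dvd tcoeff f n}"

lemma tvar_yvar: "tvar * yvar = zpoly p"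
  by (simp add: tvar_def yvar_def zpoly_def mult_single)

lemma euler_yvar [simp]: "euler yvar = - yvar"
  by (simp add: yvar_def euler_tmonom single_uminus)

lemma zderiv_yvar: "zderiv yvar = tmonom (-1) (pderiv p)"
  by (simp add: yvar_def zderiv_tmonom)

lemma tvar_zderiv_yvar: "tvar * zderiv yvar = zpoly (pderiv p)"
  by (simp add: tvar_def zderiv_yvar mult_single zpoly_def)

lemma yvar_power: "yvar ^ n = tmonom (- int n) (p ^ n)"
  by (induct n) (simp_all add: yvar_def mult_single algebra_simps)

lemma tmonom_in_model_iff: "tmonom a b \<in> model \<longleftrightarrow> p ^ nat (- a) dvd b"
  by (auto simp: model_def lookup_single when_def)

lemma model_0 [simp]: "0 \<in> model"
  by (simp add: model_def)

lemma model_add: "f \<in> model \<Longrightarrow> g \<in> model \<Longrightarrow> f + g \<in> model"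
  by (simp add: model_def lookup_add)

lemma model_uminus: "f \<in> model \<Longrightarrow> - f \<in> model"
  by (simp add: model_def)

lemma model_diff: "f \<in> model \<Longrightarrow> g \<in> model \<Longrightarrow> f - g \<in> model"
  by (simp add: model_def lookup_minus)

lemma model_zpoly: "zpoly q \<in> model"
  by (simp add: zpoly_def tmonom_in_model_iff)

lemma model_1 [simp]: "1 \<in> model"
  using model_zpoly[of 1] by simp

lemma model_tvar: "tvar \<in> model"
  by (simp add: tvar_def tmonom_in_model_iff)

lemma model_yvar: "yvar \<in> model"
  by (simp add: yvar_def tmonom_in_model_iff)

lemma model_zvar: "zvar \<in> model"
  by (simp add: zvar_def model_zpoly)

lemma model_euler: "f \<in> model \<Longrightarrow> euler f \<in> model"
  by (simp add: model_def tcoeff_euler)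

lemma model_induct [consumes 1, case_names zero add]:
  assumes "f \<in> model" and "P 0"
    and "\<And>f a b. f \<in> model \<Longrightarrow> tmonom a b \<in> model \<Longrightarrow> P f \<Longrightarrow> P (f + tmonom a b)"
  shows "P f"
  using assms(1)
proof (induct f rule: poly_mapping_induct_single)
  case zero
  then show ?case using assms(2) by simp
next
  case (add f a b)
  have coeff_a: "tcoeff f a = 0"
    using add(1) by (simp add: in_keys_iff)
  have "tcoeff f n = tcoeff (f + tmonom a b) n" if "n \<noteq> a" for n
    using that by (simp add: lookup_add lookup_single)
  then have "f \<in> model"
    using add(4) coeff_a by (auto simp: model_def) (metis dvd_0_right)
  moreover have "tcoeff (f + tmonom a b) a = b"
    using coeff_a by (simp add: lookup_add)
  then have "tmonom a b \<in> model"
    using add(4) by (metis (mono_tags) mem_Collect_eq model_def tmonom_in_model_iff)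
  ultimately show ?case using add assms(3) by blast
qed

lemma model_mult_tmonom:
  assumes "tmonom a b \<in> model" "tmonom c d \<in> model"
  shows "tmonom a b * tmonom c d \<in> model"
proof -
  have "p ^ nat (- a) * p ^ nat (- c) dvd b * d"
    using assms by (simp add: tmonom_in_model_iff mult_dvd_mono)
  moreover have "p ^ nat (- (a + c)) dvd p ^ nat (- a) * p ^ nat (- c)"
    by (simp add: le_imp_power_dvd flip: power_add)
  ultimately show ?thesis
    by (simp add: mult_single tmonom_in_model_iff dvd_trans)
qed

lemma model_mult: "f \<in> model \<Longrightarrow> g \<in> model \<Longrightarrow> f * g \<in> model"
proof (induct f rule: model_induct)
  case (add f a b)
  have "tmonom a b * g \<in> model" using \<open>g \<in> model\<close>
    by (induct g rule: model_induct)
       (simp_all add: distrib_left model_add model_mult_tmonom \<open>tmonom a b \<in> model\<close>)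
  then show ?case using add by (simp add: distrib_right model_add)
qed simp

lemma model_power: "f \<in> model \<Longrightarrow> f ^ n \<in> model"
  by (induct n) (simp_all add: model_mult)

lemma tmonom_in_model_cases:
  assumes "tmonom a b \<in> model"
  obtains q where "tmonom a b = tvar ^ nat a * zpoly q"
    | q where "tmonom a b = yvar ^ nat (- a) * zpoly q"
proof (cases "a \<ge> 0")
  case True
  then have "tmonom a b = tvar ^ nat a * zpoly b"
    by (simp add: tvar_power zpoly_def mult_single)
  then show ?thesis using that(1) by blast
next
  case False
  obtain q where "b = p ^ nat (- a) * q"
    using assms by (auto simp: tmonom_in_model_iff)
  then have "tmonom a b = yvar ^ nat (- a) * zpoly q"
    using False by (simp add: yvar_power zpoly_def mult_single)
  then show ?thesis using that(2) by blast
qed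

lemma model_induct_generators [consumes 1, case_names tvar yvar zvar const add mult]:
  assumes "f \<in> model" and "P tvar" and "P yvar" and "P zvar" and const: "\<And>c. P (zpoly [:c:])"
    and add: "\<And>f g. f \<in> model \<Longrightarrow> g \<in> model \<Longrightarrow> P f \<Longrightarrow> P g \<Longrightarrow> P (f + g)"
    and mult: "\<And>f g. f \<in> model \<Longrightarrow> g \<in> model \<Longrightarrow> P f \<Longrightarrow> P g \<Longrightarrow> P (f * g)"
  shows "P f"
proof -
  have P_power: "P (g ^ n)" if g: "g \<in> model" "P g" for g n
    by (induct n) (use const[of 1] mult[OF g(1) model_power[OF g(1)] g(2)] in simp_all)
  have P_zpoly: "P (zpoly q)" for q
  proof (induct q)
    case 0
    then show ?case using const[of 0] by simp
  next
    case (pCons c q)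
    show ?case
      unfolding zpoly_pCons[of c q]
      by (rule add[OF model_zpoly model_mult[OF model_zvar model_zpoly] const
            mult[OF model_zvar model_zpoly \<open>P zvar\<close> pCons(2)]])
  qed
  show ?thesis using assms(1)
  proof (induct f rule: model_induct)
    case zero
    then show ?case using const[of 0] by simp
  next
    case (add f a b)
    from \<open>tmonom a b \<in> model\<close> have "P (tmonom a b)"
    proof (cases rule: tmonom_in_model_cases)
      case 1
      then show ?thesis
        using mult[OF model_power[OF model_tvar] model_zpoly P_power[OF model_tvar \<open>P tvar\<close>] P_zpoly]
        by simp
    next
      case 2
      then show ?thesis
        using mult[OF model_power[OF model_yvar] model_zpoly P_power[OF model_yvar \<open>P yvar\<close>] P_zpoly]
        by simp
    qed
    then show ?case using add assms(6) by blast
  qed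
qed

text \<open>Since \<open>p'\<^sup>2 - 4 c\<^sub>2 x y\<close> is the nonzero constant \<open>disc\<close>, the elements \<open>t\<close>, \<open>y\<close>, \<open>p'(z)\<close>
  generate the unit ideal of the model.\<close>

lemma model_bezout:
  assumes "u * tvar \<in> model" "u * yvar \<in> model" "u * zpoly (pderiv p) \<in> model"
  shows "u \<in> model"
proof -
  have "zpoly (pderiv p) * zpoly (pderiv p) - zpoly [:4 * c2:] * (tvar * yvar) = zpoly [:disc:]"
    by (simp add: tvar_yvar flip: disc_identity zpoly_mult zpoly_diff)
  then have "zpoly [:1 / disc:] * (zpoly (pderiv p) * zpoly (pderiv p) - zpoly [:4 * c2:] * (tvar * yvar)) = 1"
    using disc_nonzero by (simp flip: zpoly_mult)
  then have "u = u * (zpoly [:1 / disc:] * (zpoly (pderiv p) * zpoly (pderiv p) - zpoly [:4 * c2:] * (tvar * yvar)))"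
    by simp
  also have "\<dots> = zpoly [:1 / disc:] * (zpoly (pderiv p) * (u * zpoly (pderiv p)) - zpoly [:4 * c2:] * yvar * (u * tvar))"
    by (simp add: algebra_simps)
  also have "\<dots> \<in> model"
    by (rule model_mult[OF model_zpoly model_diff[OF model_mult[OF model_zpoly assms(3)]
          model_mult[OF model_mult[OF model_zpoly model_yvar] assms(1)]]])
  finally show ?thesis .
qed

end


section \<open>The model is isomorphic to the coordinate ring\<close>

lemma poly_fun3_on_poly_curve:
  assumes "F \<in> poly_fun3"
  shows "\<exists>q. \<forall>s. F (poly a s, poly b s, poly c s) = poly q s"
  using assms
proof (induct rule: poly_fun3.induct)
  case (pf_const c)
  show ?case by (rule exI[of _ "[:c:]"]) simp
next
  case (pf_add f g)
  then show ?case by (metis poly_add)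
next
  case (pf_mult f g)
  then show ?case by (metis poly_mult)
qed auto

context quadratic_surface
begin

definition restrict_surf :: "('a \<times> 'a \<times> 'a \<Rightarrow> 'a) \<Rightarrow> ('a \<times> 'a \<times> 'a \<Rightarrow> 'a)" where
  "restrict_surf F = (\<lambda>v. if v \<in> surf p then F v else 0)"

lemma coord_ring_iff: "g \<in> coord_ring p \<longleftrightarrow> (\<exists>F \<in> poly_fun3. g = restrict_surf F)"
  by (auto simp: coord_ring_def restrict_surf_def)

lemma chart_point_in_surf: "t \<noteq> 0 \<Longrightarrow> (t, poly p z / t, z) \<in> surf p"
  by (simp add: surf_def)

lemma coord_ring_restrict_surf: "F \<in> poly_fun3 \<Longrightarrow> restrict_surf F \<in> coord_ring p"
  using coord_ring_iff by blast

lemma coord_ring_add: "g1 \<in> coord_ring p \<Longrightarrow> g2 \<in> coord_ring p \<Longrightarrow> (\<lambda>v. g1 v + g2 v) \<in> coord_ring p"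
proof -
  have "(\<lambda>v. restrict_surf F v + restrict_surf G v) = restrict_surf (\<lambda>v. F v + G v)" for F G
    by (auto simp: restrict_surf_def)
  then show "g1 \<in> coord_ring p \<Longrightarrow> g2 \<in> coord_ring p \<Longrightarrow> ?thesis"
    by (auto simp: coord_ring_iff intro: pf_add)
qed

lemma coord_ring_mult: "g1 \<in> coord_ring p \<Longrightarrow> g2 \<in> coord_ring p \<Longrightarrow> (\<lambda>v. g1 v * g2 v) \<in> coord_ring p"
proof -
  have "(\<lambda>v. restrict_surf F v * restrict_surf G v) = restrict_surf (\<lambda>v. F v * G v)" for F G
    by (auto simp: restrict_surf_def)
  then show "g1 \<in> coord_ring p \<Longrightarrow> g2 \<in> coord_ring p \<Longrightarrow> ?thesis"
    by (auto simp: coord_ring_iff intro: pf_mult)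
qed

lemma coord_ring_const_mult: "g \<in> coord_ring p \<Longrightarrow> (\<lambda>v. c * g v) \<in> coord_ring p"
proof -
  have "restrict_surf (\<lambda>_. c) \<in> coord_ring p"
    by (rule coord_ring_restrict_surf[OF pf_const])
  moreover have "(\<lambda>v. restrict_surf (\<lambda>_. c) v * g v) = (\<lambda>v. c * g v)" if "g \<in> coord_ring p"
    using that by (auto simp: coord_ring_iff restrict_surf_def)
  ultimately show "g \<in> coord_ring p \<Longrightarrow> ?thesis"
    using coord_ring_mult by metis
qed

lemma coord_ring_zero: "(\<lambda>_. 0) \<in> coord_ring p"
  using coord_ring_const_mult[of "\<lambda>_. 0" 0] coord_ring_restrict_surf[OF pf_const[of 0]]
  by (simp add: restrict_surf_def)

lemma coord_ring_diff: "g1 \<in> coord_ring p \<Longrightarrow> g2 \<in> coord_ring p \<Longrightarrow> (\<lambda>v. g1 v - g2 v) \<in> coord_ring p"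
  using coord_ring_add[of g1 "\<lambda>v. (-1) * g2 v"] coord_ring_const_mult[of g2 "-1"] by simp

text \<open>A point \<open>(0, y\<^sub>0, z\<^sub>0)\<close> of \<open>D\<^sub>p\<close> is the limit \<open>s \<rightarrow> 0\<close> of the chart points on the polynomial
  curve \<open>s \<mapsto> (s, c p'(z\<^sub>0) + c\<^sub>2 c\<^sup>2 s, z\<^sub>0 + c s)\<close> with \<open>c = y\<^sub>0 / p'(z\<^sub>0)\<close>; here \<open>p'(z\<^sub>0) \<noteq> 0\<close>
  because \<open>p(z\<^sub>0) = 0\<close> and \<open>p\<close> has simple roots.\<close>

lemma poly_fun3_zero_on_axis:
  assumes F: "F \<in> poly_fun3" and vanish: "\<And>t z. t \<noteq> 0 \<Longrightarrow> F (t, poly p z / t, z) = 0"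
    and root: "poly p z0 = 0"
  shows "F (0, y0, z0) = 0"
proof -
  define d where "d = poly (pderiv p) z0"
  have "d \<noteq> 0"
    using root rsquarefree_p by (auto simp: d_def rsquarefree_roots)
  define c where "c = y0 / d"
  obtain q where q: "\<And>s. F (poly [:0, 1:] s, poly [:c * d, c2 * c * c:] s, poly [:z0, c:] s) = poly q s"
    using poly_fun3_on_poly_curve[OF F] by blast
  have "poly q s = 0" if "s \<noteq> 0" for s
  proof -
    have "poly p (z0 + c * s) / s = c * d + c2 * c * c * s"
      using poly_p_shift[of z0 "c * s"] root that by (simp add: d_def field_simps)
    then show ?thesis
      using q[of s] vanish[OF that, of "z0 + c * s"] by (simp add: algebra_simps)
  qed
  then have "q = 0"
    by (rule poly_eq_0_if_vanishes_off_0)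
  then show ?thesis
    using q[of 0] \<open>d \<noteq> 0\<close> by (simp add: c_def)
qed

lemma coord_ring_eq_0_if_vanishes_on_chart:
  assumes g: "g \<in> coord_ring p" and vanish: "\<And>t z. t \<noteq> 0 \<Longrightarrow> g (t, poly p z / t, z) = 0"
  shows "g = (\<lambda>_. 0)"
proof
  fix v :: "'a \<times> 'a \<times> 'a"
  obtain F where F: "F \<in> poly_fun3" "g = restrict_surf F"
    using g coord_ring_iff by blast
  have F_vanish: "F (t, poly p z / t, z) = 0" if "t \<noteq> 0" for t z
    using vanish[OF that] chart_point_in_surf[OF that] F(2) by (simp add: restrict_surf_def)
  obtain x0 y0 z0 where v: "v = (x0, y0, z0)"
    by (cases v) auto
  show "g v = 0"
  proof (cases "v \<in> surf p")
    case True
    then have xy: "x0 * y0 = poly p z0"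
      by (simp add: v surf_def)
    show ?thesis
    proof (cases "x0 = 0")
      case False
      then have "y0 = poly p z0 / x0"
        using xy by (simp add: field_simps)
      then show ?thesis using vanish[OF False] v by simp
    next
      case True
      then have "F v = 0"
        using poly_fun3_zero_on_axis[OF F(1) F_vanish] xy v by simp
      then show ?thesis using F(2) by (simp add: restrict_surf_def)
    qed
  qed (use F(2) in \<open>simp add: restrict_surf_def\<close>)
qed

definition represents :: "'a lpoly \<Rightarrow> ('a \<times> 'a \<times> 'a \<Rightarrow> 'a) \<Rightarrow> bool" where
  "represents h g \<longleftrightarrow> h \<in> model \<and> g \<in> coord_ring p \<and>
     (\<forall>t z. t \<noteq> 0 \<longrightarrow> g (t, poly p z / t, z) = leval h t z)"

lemma leval_yvar: "leval yvar t z = poly p z / t"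
  by (simp add: yvar_def leval_tmonom power_int_minus_divide)

lemma poly_fun3_has_model:
  "F \<in> poly_fun3 \<Longrightarrow> \<exists>h \<in> model. \<forall>t z. t \<noteq> 0 \<longrightarrow> F (t, poly p z / t, z) = leval h t z"
proof (induct rule: poly_fun3.induct)
  case (pf_const c)
  show ?case by (rule bexI[of _ "zpoly [:c:]"]) (simp_all add: leval_zpoly model_zpoly)
next
  case pf_x
  show ?case by (rule bexI[of _ tvar]) (simp_all add: leval_tvar model_tvar)
next
  case pf_y
  show ?case by (rule bexI[of _ yvar]) (simp_all add: leval_yvar model_yvar)
next
  case pf_z
  show ?case by (rule bexI[of _ zvar]) (simp_all add: leval_zvar model_zvar)
next
  case (pf_add f g)
  then obtain h1 h2 where "h1 \<in> model" "h2 \<in> model"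
    "\<forall>t z. t \<noteq> 0 \<longrightarrow> f (t, poly p z / t, z) = leval h1 t z"
    "\<forall>t z. t \<noteq> 0 \<longrightarrow> g (t, poly p z / t, z) = leval h2 t z" by blast
  then show ?case by (intro bexI[of _ "h1 + h2"]) (simp_all add: leval_add model_add)
next
  case (pf_mult f g)
  then obtain h1 h2 where "h1 \<in> model" "h2 \<in> model"
    "\<forall>t z. t \<noteq> 0 \<longrightarrow> f (t, poly p z / t, z) = leval h1 t z"
    "\<forall>t z. t \<noteq> 0 \<longrightarrow> g (t, poly p z / t, z) = leval h2 t z" by blast
  then show ?case by (intro bexI[of _ "h1 * h2"]) (simp_all add: leval_mult model_mult)
qed

lemma model_has_poly_fun3:
  "h \<in> model \<Longrightarrow> \<exists>F \<in> poly_fun3. \<forall>t z. t \<noteq> 0 \<longrightarrow> F (t, poly p z / t, z) = leval h t z"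
proof (induct h rule: model_induct_generators)
  case tvar
  show ?case by (rule bexI[OF _ pf_x]) (simp add: leval_tvar)
next
  case yvar
  show ?case by (rule bexI[OF _ pf_y]) (simp add: leval_yvar)
next
  case zvar
  show ?case by (rule bexI[OF _ pf_z]) (simp add: leval_zvar)
next
  case (const c)
  show ?case by (rule bexI[OF _ pf_const[of c]]) (simp add: leval_zpoly)
next
  case (add f g)
  then obtain F G where "F \<in> poly_fun3" "G \<in> poly_fun3"
    "\<forall>t z. t \<noteq> 0 \<longrightarrow> F (t, poly p z / t, z) = leval f t z"
    "\<forall>t z. t \<noteq> 0 \<longrightarrow> G (t, poly p z / t, z) = leval g t z" by blast
  then show ?case by (intro bexI[of _ "\<lambda>v. F v + G v"] pf_add) (simp_all add: leval_add)
next
  case (mult f g)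
  then obtain F G where "F \<in> poly_fun3" "G \<in> poly_fun3"
    "\<forall>t z. t \<noteq> 0 \<longrightarrow> F (t, poly p z / t, z) = leval f t z"
    "\<forall>t z. t \<noteq> 0 \<longrightarrow> G (t, poly p z / t, z) = leval g t z" by blast
  then show ?case by (intro bexI[of _ "\<lambda>v. F v * G v"] pf_mult) (simp_all add: leval_mult)
qed

lemma represents_exists_model: "g \<in> coord_ring p \<Longrightarrow> \<exists>h. represents h g"
proof -
  assume g: "g \<in> coord_ring p"
  then obtain F where F: "F \<in> poly_fun3" "g = restrict_surf F"
    by (auto simp: coord_ring_iff)
  then obtain h where "h \<in> model" "\<forall>t z. t \<noteq> 0 \<longrightarrow> F (t, poly p z / t, z) = leval h t z"
    using poly_fun3_has_model by blast
  then have "represents h g"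
    using F g chart_point_in_surf by (simp add: represents_def restrict_surf_def)
  then show ?thesis by blast
qed

lemma represents_exists_fun: "h \<in> model \<Longrightarrow> \<exists>g. represents h g"
proof -
  assume h: "h \<in> model"
  then obtain F where F: "F \<in> poly_fun3" "\<forall>t z. t \<noteq> 0 \<longrightarrow> F (t, poly p z / t, z) = leval h t z"
    using model_has_poly_fun3 by blast
  then have "represents h (restrict_surf F)"
    using h chart_point_in_surf coord_ring_restrict_surf by (simp add: represents_def restrict_surf_def)
  then show ?thesis by blast
qed

lemma represents_unique_model: "represents h g \<Longrightarrow> represents h' g \<Longrightarrow> h = h'"
  using lpoly_eq_0_if_leval_vanishes[of "h - h'"] by (auto simp: represents_def leval_diff)

lemma represents_unique_fun: "represents h g \<Longrightarrow> represents h g' \<Longrightarrow> g = g'"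
  using coord_ring_eq_0_if_vanishes_on_chart[of "\<lambda>v. g v - g' v"]
  by (auto simp: represents_def coord_ring_diff fun_eq_iff)

definition fun_of :: "'a lpoly \<Rightarrow> ('a \<times> 'a \<times> 'a \<Rightarrow> 'a)" where
  "fun_of h = (THE g. represents h g)"

definition model_of :: "('a \<times> 'a \<times> 'a \<Rightarrow> 'a) \<Rightarrow> 'a lpoly" where
  "model_of g = (THE h. represents h g)"

lemma fun_of_eq: "represents h g \<Longrightarrow> fun_of h = g"
  unfolding fun_of_def by (rule the_equality) (auto intro: represents_unique_fun)

lemma model_of_eq: "represents h g \<Longrightarrow> model_of g = h"
  unfolding model_of_def by (rule the_equality) (auto intro: represents_unique_model)

lemma represents_fun_of: "h \<in> model \<Longrightarrow> represents h (fun_of h)"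
  using represents_exists_fun fun_of_eq by metis

lemma represents_model_of: "g \<in> coord_ring p \<Longrightarrow> represents (model_of g) g"
  using represents_exists_model model_of_eq by metis

lemma fun_of_in_coord_ring: "h \<in> model \<Longrightarrow> fun_of h \<in> coord_ring p"
  using represents_fun_of represents_def by blast

lemma model_of_in_model: "g \<in> coord_ring p \<Longrightarrow> model_of g \<in> model"
  using represents_model_of represents_def by blast

lemma model_of_fun_of: "h \<in> model \<Longrightarrow> model_of (fun_of h) = h"
  using represents_fun_of model_of_eq by blast

lemma fun_of_model_of: "g \<in> coord_ring p \<Longrightarrow> fun_of (model_of g) = g"
  using represents_model_of fun_of_eq by blast

lemma represents_add: "represents h1 g1 \<Longrightarrow> represents h2 g2 \<Longrightarrow> represents (h1 + h2) (\<lambda>v. g1 v + g2 v)"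
  by (auto simp: represents_def model_add coord_ring_add leval_add)

lemma represents_mult: "represents h1 g1 \<Longrightarrow> represents h2 g2 \<Longrightarrow> represents (h1 * h2) (\<lambda>v. g1 v * g2 v)"
  by (auto simp: represents_def model_mult coord_ring_mult leval_mult)

lemma represents_const_mult: "represents h g \<Longrightarrow> represents (zpoly [:c:] * h) (\<lambda>v. c * g v)"
  by (auto simp: represents_def model_mult model_zpoly coord_ring_const_mult leval_mult leval_zpoly)

lemma represents_zero: "represents 0 (\<lambda>_. 0)"
  by (auto simp: represents_def coord_ring_zero)

lemma fun_of_add: "h1 \<in> model \<Longrightarrow> h2 \<in> model \<Longrightarrow> fun_of (h1 + h2) = (\<lambda>v. fun_of h1 v + fun_of h2 v)"
  by (intro fun_of_eq represents_add represents_fun_of)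

lemma fun_of_mult: "h1 \<in> model \<Longrightarrow> h2 \<in> model \<Longrightarrow> fun_of (h1 * h2) = (\<lambda>v. fun_of h1 v * fun_of h2 v)"
  by (intro fun_of_eq represents_mult represents_fun_of)

lemma fun_of_const_mult: "h \<in> model \<Longrightarrow> fun_of (zpoly [:c:] * h) = (\<lambda>v. c * fun_of h v)"
  by (intro fun_of_eq represents_const_mult represents_fun_of)

lemma fun_of_zero: "fun_of 0 = (\<lambda>_. 0)"
  by (intro fun_of_eq represents_zero)

lemma model_of_add:
  "g1 \<in> coord_ring p \<Longrightarrow> g2 \<in> coord_ring p \<Longrightarrow> model_of (\<lambda>v. g1 v + g2 v) = model_of g1 + model_of g2"
  by (intro model_of_eq represents_add represents_model_of)

lemma model_of_mult:
  "g1 \<in> coord_ring p \<Longrightarrow> g2 \<in> coord_ring p \<Longrightarrow> model_of (\<lambda>v. g1 v * g2 v) = model_of g1 * model_of g2"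
  by (intro model_of_eq represents_mult represents_model_of)

lemma model_of_const_mult: "g \<in> coord_ring p \<Longrightarrow> model_of (\<lambda>v. c * g v) = zpoly [:c:] * model_of g"
  by (intro model_of_eq represents_const_mult represents_model_of)

lemma model_of_zero: "model_of (\<lambda>_. 0) = 0"
  by (intro model_of_eq represents_zero)

lemma fun_of_inj: "h1 \<in> model \<Longrightarrow> h2 \<in> model \<Longrightarrow> fun_of h1 = fun_of h2 \<Longrightarrow> h1 = h2"
  by (metis model_of_fun_of)

lemma fun_of_uminus: "h \<in> model \<Longrightarrow> fun_of (- h) = (\<lambda>v. - fun_of h v)"
  using fun_of_const_mult[of h "-1"] by (simp add: zpoly_minus_1_mult)

lemma fun_of_diff: "h1 \<in> model \<Longrightarrow> h2 \<in> model \<Longrightarrow> fun_of (h1 - h2) = (\<lambda>v. fun_of h1 v - fun_of h2 v)"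
  using fun_of_add[of h1 "- h2"] fun_of_uminus[of h2] model_uminus[of h2] by simp

end


section \<open>Vector fields as derivations of the model\<close>

context quadratic_surface
begin

lemma vfield_in_coord_ring: "is_vfield p D \<Longrightarrow> g \<in> coord_ring p \<Longrightarrow> D g \<in> coord_ring p"
  by (simp add: is_vfield_def)

lemma vfield_outside: "is_vfield p D \<Longrightarrow> g \<notin> coord_ring p \<Longrightarrow> D g = (\<lambda>_. 0)"
  by (simp add: is_vfield_def)

lemma vfield_add:
  "is_vfield p D \<Longrightarrow> f \<in> coord_ring p \<Longrightarrow> g \<in> coord_ring p \<Longrightarrow> D (\<lambda>v. f v + g v) = (\<lambda>v. D f v + D g v)"
  by (simp add: is_vfield_def)

lemma vfield_const_mult: "is_vfield p D \<Longrightarrow> f \<in> coord_ring p \<Longrightarrow> D (\<lambda>v. c * f v) = (\<lambda>v. c * D f v)"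
  by (simp add: is_vfield_def)

lemma vfield_mult:
  "is_vfield p D \<Longrightarrow> f \<in> coord_ring p \<Longrightarrow> g \<in> coord_ring p \<Longrightarrow>
     D (\<lambda>v. f v * g v) = (\<lambda>v. f v * D g v + g v * D f v)"
  by (simp add: is_vfield_def)

definition model_der :: "('a lpoly \<Rightarrow> 'a lpoly) \<Rightarrow> bool" where
  "model_der \<Delta> \<longleftrightarrow> (\<forall>f \<in> model. \<Delta> f \<in> model)
     \<and> (\<forall>f \<in> model. \<forall>g \<in> model. \<Delta> (f + g) = \<Delta> f + \<Delta> g)
     \<and> (\<forall>c. \<forall>f \<in> model. \<Delta> (zpoly [:c:] * f) = zpoly [:c:] * \<Delta> f)
     \<and> (\<forall>f \<in> model. \<forall>g \<in> model. \<Delta> (f * g) = f * \<Delta> g + g * \<Delta> f)"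

lemma model_der_in_model: "model_der \<Delta> \<Longrightarrow> f \<in> model \<Longrightarrow> \<Delta> f \<in> model"
  by (simp add: model_der_def)

lemma model_der_add: "model_der \<Delta> \<Longrightarrow> f \<in> model \<Longrightarrow> g \<in> model \<Longrightarrow> \<Delta> (f + g) = \<Delta> f + \<Delta> g"
  by (simp add: model_der_def)

lemma model_der_const_mult: "model_der \<Delta> \<Longrightarrow> f \<in> model \<Longrightarrow> \<Delta> (zpoly [:c:] * f) = zpoly [:c:] * \<Delta> f"
  by (simp add: model_der_def)

lemma model_der_mult: "model_der \<Delta> \<Longrightarrow> f \<in> model \<Longrightarrow> g \<in> model \<Longrightarrow> \<Delta> (f * g) = f * \<Delta> g + g * \<Delta> f"
  by (simp add: model_der_def)

lemma model_der_0: "model_der \<Delta> \<Longrightarrow> \<Delta> 0 = 0"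
  using model_der_add[of \<Delta> 0 0] by simp

lemma model_der_1: "model_der \<Delta> \<Longrightarrow> \<Delta> 1 = 0"
  using model_der_mult[of \<Delta> 1 1] by simp

lemma model_der_const: "model_der \<Delta> \<Longrightarrow> \<Delta> (zpoly [:c:]) = 0"
  using model_der_const_mult[of \<Delta> 1 c] model_der_1[of \<Delta>] by simp

lemma model_der_funpow_in_model: "model_der \<Delta> \<Longrightarrow> f \<in> model \<Longrightarrow> (\<Delta> ^^ n) f \<in> model"
  by (induct n) (simp_all add: model_der_in_model)

lemma model_der_sum: "model_der \<Delta>1 \<Longrightarrow> model_der \<Delta>2 \<Longrightarrow> model_der (\<lambda>h. \<Delta>1 h + \<Delta>2 h)"
  unfolding model_der_def by (simp add: model_add algebra_simps)

lemma model_der_scale: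
  assumes d: "model_der \<Delta>"
  shows "model_der (\<lambda>h. zpoly [:c:] * \<Delta> h)"
  unfolding model_der_def
proof (intro conjI ballI allI)
  fix c' f assume "f \<in> model"
  then show "zpoly [:c:] * \<Delta> (zpoly [:c':] * f) = zpoly [:c':] * (zpoly [:c:] * \<Delta> f)"
    using d by (simp add: model_der_const_mult mult.left_commute)
qed (use d in \<open>simp_all add: model_mult model_zpoly model_der_in_model model_der_add
      model_der_mult algebra_simps\<close>)

lemma model_der_commutator:
  assumes d1: "model_der \<Delta>1" and d2: "model_der \<Delta>2"
  shows "model_der (\<lambda>f. \<Delta>1 (\<Delta>2 f) - \<Delta>2 (\<Delta>1 f))"
  unfolding model_der_def
proof (intro conjI ballI allI)
  fix f g assume fg: "f \<in> model" "g \<in> model"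
  have "\<Delta>1 (\<Delta>2 (f * g)) = f * \<Delta>1 (\<Delta>2 g) + \<Delta>2 g * \<Delta>1 f + (g * \<Delta>1 (\<Delta>2 f) + \<Delta>2 f * \<Delta>1 g)"
    "\<Delta>2 (\<Delta>1 (f * g)) = f * \<Delta>2 (\<Delta>1 g) + \<Delta>1 g * \<Delta>2 f + (g * \<Delta>2 (\<Delta>1 f) + \<Delta>1 f * \<Delta>2 g)"
    using fg d1 d2 by (simp_all add: model_der_mult model_der_add model_mult model_der_in_model)
  then show "\<Delta>1 (\<Delta>2 (f * g)) - \<Delta>2 (\<Delta>1 (f * g)) =
      f * (\<Delta>1 (\<Delta>2 g) - \<Delta>2 (\<Delta>1 g)) + g * (\<Delta>1 (\<Delta>2 f) - \<Delta>2 (\<Delta>1 f))"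
    by (simp add: algebra_simps)
qed (use d1 d2 in \<open>simp_all add: model_diff model_der_in_model model_der_add model_der_const_mult
      right_diff_distrib\<close>)

definition der_of :: "'a vfield \<Rightarrow> 'a lpoly \<Rightarrow> 'a lpoly" where
  "der_of D h = model_of (D (fun_of h))"

definition vfield_of :: "('a lpoly \<Rightarrow> 'a lpoly) \<Rightarrow> 'a vfield" where
  "vfield_of \<Delta> = (\<lambda>g v. if g \<in> coord_ring p then fun_of (\<Delta> (model_of g)) v else 0)"

lemma der_of_in_model: "is_vfield p D \<Longrightarrow> h \<in> model \<Longrightarrow> der_of D h \<in> model"
  by (simp add: der_of_def model_of_in_model vfield_in_coord_ring fun_of_in_coord_ring)

lemma fun_of_der_of: "is_vfield p D \<Longrightarrow> h \<in> model \<Longrightarrow> fun_of (der_of D h) = D (fun_of h)"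
  by (simp add: der_of_def fun_of_model_of vfield_in_coord_ring fun_of_in_coord_ring)

lemma funpow_fun_of:
  "is_vfield p D \<Longrightarrow> h \<in> model \<Longrightarrow> (D ^^ n) (fun_of h) = fun_of ((der_of D ^^ n) h) \<and> (der_of D ^^ n) h \<in> model"
  by (induct n) (simp_all add: fun_of_der_of der_of_in_model)

lemma model_der_der_of:
  assumes D: "is_vfield p D"
  shows "model_der (der_of D)"
  unfolding model_der_def
proof (intro conjI ballI allI)
  fix f g assume fg: "f \<in> model" "g \<in> model"
  have "der_of D (f * g) = model_of (\<lambda>v. fun_of f v * D (fun_of g) v + fun_of g v * D (fun_of f) v)"
    using D fg by (simp add: der_of_def fun_of_mult vfield_mult fun_of_in_coord_ring)
  also have "\<dots> = f * der_of D g + g * der_of D f"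
    using D fg by (simp add: der_of_def model_of_add model_of_mult coord_ring_mult
        fun_of_in_coord_ring vfield_in_coord_ring model_of_fun_of)
  finally show "der_of D (f * g) = f * der_of D g + g * der_of D f" .
qed (use D in \<open>simp_all add: model_of_in_model der_of_def fun_of_add fun_of_const_mult vfield_add
      vfield_const_mult model_of_add model_of_const_mult fun_of_in_coord_ring vfield_in_coord_ring\<close>)

lemma vfield_of_in: "g \<in> coord_ring p \<Longrightarrow> vfield_of \<Delta> g = fun_of (\<Delta> (model_of g))"
  by (simp add: vfield_of_def)

lemma vfield_of_outside: "g \<notin> coord_ring p \<Longrightarrow> vfield_of \<Delta> g = (\<lambda>_. 0)"
  by (simp add: vfield_of_def)

lemma is_vfield_vfield_of:
  assumes d: "model_der \<Delta>"
  shows "is_vfield p (vfield_of \<Delta>)"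
  unfolding is_vfield_def
proof (intro conjI ballI allI impI)
  fix f g assume fg: "f \<in> coord_ring p" "g \<in> coord_ring p"
  have "vfield_of \<Delta> (\<lambda>v. f v * g v) = fun_of (\<Delta> (model_of f * model_of g))"
    using fg by (simp add: vfield_of_in coord_ring_mult model_of_mult)
  also have "\<dots> = fun_of (model_of f * \<Delta> (model_of g) + model_of g * \<Delta> (model_of f))"
    using fg d by (simp add: model_der_mult model_of_in_model)
  also have "\<dots> = (\<lambda>v. f v * vfield_of \<Delta> g v + g v * vfield_of \<Delta> f v)"
    using fg d by (simp add: fun_of_add fun_of_mult model_der_in_model model_of_in_model model_mult
        fun_of_model_of vfield_of_in)
  finally show "vfield_of \<Delta> (\<lambda>v. f v * g v) = (\<lambda>v. f v * vfield_of \<Delta> g v + g v * vfield_of \<Delta> f v)" .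
  show "vfield_of \<Delta> (\<lambda>v. f v + g v) = (\<lambda>v. vfield_of \<Delta> f v + vfield_of \<Delta> g v)"
    using fg d by (simp add: vfield_of_in coord_ring_add model_of_add model_der_add model_of_in_model
        fun_of_add model_der_in_model)
qed (use d in \<open>simp_all add: vfield_of_in vfield_of_outside fun_of_in_coord_ring model_der_in_model
      model_of_in_model coord_ring_const_mult model_of_const_mult model_der_const_mult fun_of_const_mult\<close>)

lemma der_of_vfield_of: "model_der \<Delta> \<Longrightarrow> h \<in> model \<Longrightarrow> der_of (vfield_of \<Delta>) h = \<Delta> h"
  by (simp add: der_of_def vfield_of_in fun_of_in_coord_ring model_of_fun_of model_der_in_model)

lemma vfield_of_der_of: "is_vfield p D \<Longrightarrow> vfield_of (der_of D) = D"
  by (intro ext)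
     (auto simp: vfield_of_def der_of_def fun_of_model_of vfield_in_coord_ring vfield_outside)

lemma vfield_of_cong: "(\<And>h. h \<in> model \<Longrightarrow> \<Delta>1 h = \<Delta>2 h) \<Longrightarrow> vfield_of \<Delta>1 = vfield_of \<Delta>2"
  by (intro ext) (auto simp: vfield_of_def model_of_in_model)

lemma vf_add_vfield_of:
  "model_der \<Delta>1 \<Longrightarrow> model_der \<Delta>2 \<Longrightarrow> vf_add (vfield_of \<Delta>1) (vfield_of \<Delta>2) = vfield_of (\<lambda>h. \<Delta>1 h + \<Delta>2 h)"
  by (intro ext) (auto simp: vf_add_def vfield_of_def fun_of_add model_der_in_model model_of_in_model)

lemma vf_smult_vfield_of: "model_der \<Delta> \<Longrightarrow> vf_smult c (vfield_of \<Delta>) = vfield_of (\<lambda>h. zpoly [:c:] * \<Delta> h)"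
  by (intro ext) (auto simp: vf_smult_def vfield_of_def fun_of_const_mult model_der_in_model model_of_in_model)

lemma vf_zero_eq_vfield_of: "vf_zero = vfield_of (\<lambda>h. 0)"
  by (intro ext) (auto simp: vf_zero_def vfield_of_def fun_of_zero)

lemma vf_bracket_vfield_of:
  assumes d: "model_der \<Delta>1" "model_der \<Delta>2"
  shows "vf_bracket (vfield_of \<Delta>1) (vfield_of \<Delta>2) = vfield_of (\<lambda>h. \<Delta>1 (\<Delta>2 h) - \<Delta>2 (\<Delta>1 h))"
proof (rule ext)
  fix g
  have zero: "vfield_of \<Delta> (\<lambda>_. 0) = (\<lambda>_. 0)" if "model_der \<Delta>" for \<Delta>
    using that by (simp add: vfield_of_in coord_ring_zero model_of_zero model_der_0 fun_of_zero)
  show "vf_bracket (vfield_of \<Delta>1) (vfield_of \<Delta>2) g = vfield_of (\<lambda>h. \<Delta>1 (\<Delta>2 h) - \<Delta>2 (\<Delta>1 h)) g"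
    using d zero
    by (cases "g \<in> coord_ring p")
       (simp_all add: vf_bracket_def vfield_of_in vfield_of_outside fun_of_in_coord_ring model_der_in_model
         model_of_in_model model_of_fun_of fun_of_diff)
qed

end


section \<open>Hamiltonian vector fields and divergence\<close>

lemma pderiv_dvd_of_power_dvd:
  fixes q :: "'a::idom poly"
  assumes "q ^ Suc k dvd b"
  shows "q ^ k dvd pderiv b"
proof -
  obtain c where b: "b = q ^ Suc k * c"
    using assms by (auto elim: dvdE)
  have "pderiv b = q ^ k * (q * pderiv c + smult (of_nat (Suc k)) (c * pderiv q))"
    unfolding b pderiv_mult pderiv_power_Suc by (simp add: algebra_simps)
  then show ?thesis by simp
qed

context quadratic_surface
begin

lemma model_zderiv_mult_tvar: "h \<in> model \<Longrightarrow> zderiv h * tvar \<in> model"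
proof (induct h rule: model_induct)
  case (add f a b)
  have "p ^ nat (- (a + 1)) dvd pderiv b"
  proof (cases "a \<ge> 0")
    case False
    then have "nat (- a) = Suc (nat (- (a + 1)))" by simp
    then show ?thesis
      using add(2) pderiv_dvd_of_power_dvd by (metis tmonom_in_model_iff)
  qed simp
  then have "zderiv (tmonom a b) * tvar \<in> model"
    by (simp add: zderiv_tmonom tvar_def mult_single tmonom_in_model_iff)
  then show ?case
    using add by (simp add: zderiv_add distrib_right model_add)
qed simp

lemma model_zderiv_yvar_euler: "h \<in> model \<Longrightarrow> zderiv h * yvar + euler h * zderiv yvar \<in> model"
proof (induct h rule: model_induct)
  case (add f a b)
  have monom: "zderiv (tmonom a b) * yvar + euler (tmonom a b) * zderiv yvar =
      tmonom (a - 1) (pderiv b * p + of_int a * b * pderiv p)"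
    by (simp add: zderiv_tmonom euler_tmonom yvar_def zderiv_yvar mult_single single_add algebra_simps)
  have "p ^ nat (- (a - 1)) dvd pderiv b * p + of_int a * b * pderiv p"
  proof (cases "a \<ge> 1")
    case False
    define m where "m = nat (- a)"
    have a: "a = - int m" and exp: "nat (- (a - 1)) = Suc m"
      using False by (auto simp: m_def)
    obtain c where b: "b = p ^ m * c"
      using add(2) by (auto simp: tmonom_in_model_iff m_def elim: dvdE)
    have "pderiv b * p + of_int a * b * pderiv p = p ^ Suc m * pderiv c"
    proof (cases m)
      case 0
      then show ?thesis by (simp add: b a pderiv_mult algebra_simps)
    next
      case (Suc k)
      have "pderiv b * p + of_int a * b * pderiv p
          = (p ^ m * pderiv c + c * (smult (of_nat m) (p ^ k) * pderiv p)) * p - of_nat m * (p ^ m * c) * pderiv p"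
        by (simp only: b a pderiv_mult pderiv_power_Suc Suc of_int_minus of_int_of_nat_eq)
           (simp add: algebra_simps)
      also have "\<dots> = p ^ Suc m * pderiv c"
        by (simp add: Suc algebra_simps of_nat_poly)
      finally show ?thesis .
    qed
    then show ?thesis using exp by simp
  qed simp
  then have "zderiv (tmonom a b) * yvar + euler (tmonom a b) * zderiv yvar \<in> model"
    by (simp only: monom tmonom_in_model_iff)
  moreover have "zderiv (f + tmonom a b) * yvar + euler (f + tmonom a b) * zderiv yvar =
      (zderiv f * yvar + euler f * zderiv yvar) + (zderiv (tmonom a b) * yvar + euler (tmonom a b) * zderiv yvar)"
    by (simp add: zderiv_add euler_add algebra_simps)
  ultimately show ?case
    using add(3) by (simp add: model_add)
qed simp

lemma poisson_tvar: "poisson h tvar = zderiv h * tvar"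
  by (simp add: poisson_def)

lemma poisson_yvar: "poisson h yvar = - (zderiv h * yvar + euler h * zderiv yvar)"
  by (simp add: poisson_def)

lemma poisson_zvar: "poisson h zvar = - euler h"
  by (simp add: poisson_def)

lemma poisson_const_right: "poisson h (zpoly [:c:]) = 0"
  by (simp add: poisson_def zderiv_zpoly)

lemma poisson_const_left: "poisson (zpoly [:c:]) h = 0"
  by (simp add: poisson_def zderiv_zpoly)

lemma poisson_tvar_left: "poisson tvar f = - (tvar * zderiv f)"
  by (simp add: poisson_def)

lemma poisson_yvar_left: "poisson yvar f = zderiv yvar * euler f + yvar * zderiv f"
  by (simp add: poisson_def)

lemma poisson_zvar_tvar: "poisson zvar tvar = tvar"
  by (simp add: poisson_def)

lemma poisson_zvar_yvar: "poisson zvar yvar = - yvar"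
  by (simp add: poisson_def)

lemma poisson_tvar_yvar: "poisson tvar yvar = - zpoly (pderiv p)"
  by (simp add: poisson_def tvar_zderiv_yvar)

lemma model_poisson:
  assumes "h \<in> model" and "f \<in> model"
  shows "poisson h f \<in> model"
  using assms(2)
proof (induct f rule: model_induct_generators)
  case tvar
  show ?case using assms(1) by (simp add: poisson_tvar model_zderiv_mult_tvar)
next
  case yvar
  show ?case
    unfolding poisson_yvar by (rule model_uminus[OF model_zderiv_yvar_euler[OF assms(1)]])
next
  case zvar
  show ?case using assms(1) by (simp add: poisson_zvar model_euler model_uminus)
next
  case (const c)
  show ?case by (simp add: poisson_const_right)
next
  case (add f g)
  then show ?case by (simp add: poisson_add_right model_add)
next
  case (mult f g)
  then show ?case by (simp add: poisson_mult_right model_add model_mult)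
qed

lemma model_der_poisson: "h \<in> model \<Longrightarrow> model_der (poisson h)"
  unfolding model_der_def
  by (simp add: model_poisson poisson_add_right poisson_mult_right poisson_const_right algebra_simps)

definition ham :: "'a lpoly \<Rightarrow> 'a vfield" where
  "ham h = vfield_of (poisson h)"

lemma is_vfield_ham: "h \<in> model \<Longrightarrow> is_vfield p (ham h)"
  by (simp add: ham_def is_vfield_vfield_of model_der_poisson)

lemma der_of_ham: "h \<in> model \<Longrightarrow> f \<in> model \<Longrightarrow> der_of (ham h) f = poisson h f"
  by (simp add: ham_def der_of_vfield_of model_der_poisson)

lemma vf_bracket_ham:
  assumes "a \<in> model" "b \<in> model"
  shows "vf_bracket (ham a) (ham b) = ham (poisson a b)"
proof -
  have "vf_bracket (ham a) (ham b) = vfield_of (\<lambda>h. poisson a (poisson b h) - poisson b (poisson a h))"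
    using assms by (simp add: ham_def vf_bracket_vfield_of model_der_poisson)
  also have "\<dots> = ham (poisson a b)"
    unfolding ham_def by (rule vfield_of_cong) (simp add: poisson_jacobi[of a b])
  finally show ?thesis .
qed

lemma vf_add_ham:
  assumes "a \<in> model" "b \<in> model"
  shows "vf_add (ham a) (ham b) = ham (a + b)"
proof -
  have "vf_add (ham a) (ham b) = vfield_of (\<lambda>h. poisson a h + poisson b h)"
    using assms by (simp add: ham_def vf_add_vfield_of model_der_poisson)
  also have "\<dots> = ham (a + b)"
    unfolding ham_def by (rule vfield_of_cong) (simp add: poisson_add_left)
  finally show ?thesis .
qed

lemma vf_smult_ham:
  assumes "a \<in> model"
  shows "vf_smult c (ham a) = ham (zpoly [:c:] * a)"
proof -
  have "vf_smult c (ham a) = vfield_of (\<lambda>h. zpoly [:c:] * poisson a h)"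
    using assms by (simp add: ham_def vf_smult_vfield_of model_der_poisson)
  also have "\<dots> = ham (zpoly [:c:] * a)"
    unfolding ham_def by (rule vfield_of_cong) (simp add: poisson_mult_left poisson_const_left)
  finally show ?thesis .
qed

lemma ham_0: "ham 0 = vf_zero"
  unfolding ham_def vf_zero_eq_vfield_of by (rule vfield_of_cong) simp

lemma ham_const: "ham (zpoly [:c:]) = vf_zero"
  unfolding ham_def vf_zero_eq_vfield_of by (rule vfield_of_cong) (simp add: poisson_const_left)

lemma ham_add_const: "ham (h + zpoly [:c:]) = ham h"
  unfolding ham_def by (rule vfield_of_cong) (simp add: poisson_add_left poisson_const_left)

lemma model_der_zpoly: "model_der \<Delta> \<Longrightarrow> \<Delta> (zpoly q) = zpoly (pderiv q) * \<Delta> zvar"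
proof (induct q)
  case 0
  then show ?case by (simp add: model_der_0)
next
  case (pCons c q)
  have "\<Delta> (zpoly (pCons c q)) = zvar * \<Delta> (zpoly q) + zpoly q * \<Delta> zvar"
    using pCons by (simp add: zpoly_pCons[of c q] model_der_add model_der_mult model_der_const
        model_zpoly model_zvar model_mult)
  also have "\<dots> = zpoly (pderiv (pCons c q)) * \<Delta> zvar"
    using pCons zpoly_pCons[of 0 "pderiv q"]
    by (simp add: pderiv_pCons zpoly_add algebra_simps)
  finally show ?case .
qed

text \<open>A derivation of the model is determined by \<open>\<alpha> = \<Delta> z\<close> and \<open>\<beta> = \<Delta> t / t\<close>: it is
  \<open>\<alpha> \<partial>\<^sub>z + \<beta> t\<partial>\<^sub>t\<close>, with divergence \<open>\<partial>\<^sub>z \<alpha> + t\<partial>\<^sub>t \<beta>\<close> relative to \<open>dt/t \<and> dz\<close>.\<close>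

definition zcoeff :: "('a lpoly \<Rightarrow> 'a lpoly) \<Rightarrow> 'a lpoly" where
  "zcoeff \<Delta> = \<Delta> zvar"

definition ecoeff :: "('a lpoly \<Rightarrow> 'a lpoly) \<Rightarrow> 'a lpoly" where
  "ecoeff \<Delta> = \<Delta> tvar * tinv"

definition divergence :: "('a lpoly \<Rightarrow> 'a lpoly) \<Rightarrow> 'a lpoly" where
  "divergence \<Delta> = zderiv (zcoeff \<Delta>) + euler (ecoeff \<Delta>)"

lemma ecoeff_mult_tvar: "ecoeff \<Delta> * tvar = \<Delta> tvar"
  by (simp add: ecoeff_def mult.assoc tinv_tvar)

lemma model_der_normal_form:
  assumes d: "model_der \<Delta>" and f: "f \<in> model"
  shows "\<Delta> f = zcoeff \<Delta> * zderiv f + ecoeff \<Delta> * euler f"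
  using f unfolding zcoeff_def ecoeff_def
proof (induct f rule: model_induct_generators)
  case tvar
  then show ?case by (simp add: tinv_tvar mult.assoc)
next
  case yvar
  have "tvar * \<Delta> yvar + yvar * \<Delta> tvar = zpoly (pderiv p) * \<Delta> zvar"
    using d model_der_mult[OF d model_tvar model_yvar] model_der_zpoly[OF d, of p] by (simp add: tvar_yvar)
  then have "\<Delta> yvar = tinv * (zpoly (pderiv p) * \<Delta> zvar - yvar * \<Delta> tvar)"
    by (metis tinv_tvar add_diff_cancel_right' mult.assoc mult_1)
  also have "\<dots> = \<Delta> zvar * zderiv yvar + \<Delta> tvar * tinv * euler yvar"
    by (simp add: tinv_def zpoly_def zderiv_yvar mult_single algebra_simps)
  finally show ?case .
next
  case (const c)
  then show ?case using d by (simp add: model_der_const zderiv_zpoly)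
next
  case (add f g)
  then show ?case using d by (simp add: model_der_add zderiv_add euler_add algebra_simps)
next
  case (mult f g)
  then show ?case using d by (simp add: model_der_mult zderiv_mult euler_mult algebra_simps)
qed simp

lemma poisson_der_identity:
  shows "poisson (\<alpha> * zderiv f + \<beta> * euler f) g + poisson f (\<alpha> * zderiv g + \<beta> * euler g)
    = \<alpha> * zderiv (poisson f g) + \<beta> * euler (poisson f g) + (zderiv \<alpha> + euler \<beta>) * poisson f g"
  unfolding poisson_def
  by (simp add: zderiv_mult euler_mult zderiv_add euler_add zderiv_diff euler_diff euler_zderiv
      algebra_simps)

lemma model_der_poisson_identity:
  assumes d: "model_der \<Delta>" and fg: "f \<in> model" "g \<in> model"
  shows "poisson (\<Delta> f) g + poisson f (\<Delta> g) = \<Delta> (poisson f g) + divergence \<Delta> * poisson f g"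
  using poisson_der_identity[of "zcoeff \<Delta>" f "ecoeff \<Delta>" g]
  by (simp add: model_der_normal_form[OF d] fg model_poisson divergence_def)

lemma divergence_in_model:
  assumes d: "model_der \<Delta>"
  shows "divergence \<Delta> \<in> model"
proof -
  have div_mult: "divergence \<Delta> * poisson f g \<in> model" if "f \<in> model" "g \<in> model" for f g
  proof -
    have "divergence \<Delta> * poisson f g = poisson (\<Delta> f) g + poisson f (\<Delta> g) - \<Delta> (poisson f g)"
      using model_der_poisson_identity[OF d that] by (simp add: algebra_simps)
    also have "\<dots> \<in> model"
      using that by (intro model_diff model_add model_poisson model_der_in_model[OF d])
    finally show ?thesis .
  qed
  show ?thesis
  proof (rule model_bezout)
    show "divergence \<Delta> * tvar \<in> model"
      using div_mult[OF model_zvar model_tvar] by (simp add: poisson_zvar_tvar)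
    show "divergence \<Delta> * yvar \<in> model"
      using model_uminus[OF div_mult[OF model_zvar model_yvar]] by (simp add: poisson_zvar_yvar)
    show "divergence \<Delta> * zpoly (pderiv p) \<in> model"
      using model_uminus[OF div_mult[OF model_tvar model_yvar]] by (simp add: poisson_tvar_yvar)
  qed
qed

end


section \<open>Locally nilpotent derivations are divergence free\<close>

lemma funpow_closed:
  fixes D :: "'b \<Rightarrow> 'b"
  shows "(\<And>x. x \<in> A \<Longrightarrow> D x \<in> A) \<Longrightarrow> x \<in> A \<Longrightarrow> (D ^^ n) x \<in> A"
  by (induct n) auto

lemma funpow_add_closed:
  fixes D :: "'b::plus \<Rightarrow> 'b"
  assumes "\<And>x. x \<in> A \<Longrightarrow> D x \<in> A" and "\<And>u v. u \<in> A \<Longrightarrow> v \<in> A \<Longrightarrow> D (u + v) = D u + D v"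
  shows "u \<in> A \<Longrightarrow> v \<in> A \<Longrightarrow> (D ^^ n) (u + v) = (D ^^ n) u + (D ^^ n) v"
  by (induct n) (simp_all add: assms funpow_closed)

lemma funpow_fixes_0:
  fixes D :: "'b::zero \<Rightarrow> 'b"
  shows "D 0 = 0 \<Longrightarrow> (D ^^ n) 0 = 0"
  by (induct n) auto

lemma funpow_Suc_apply:
  fixes D :: "'b \<Rightarrow> 'b"
  shows "(D ^^ Suc n) x = (D ^^ n) (D x)"
  by (metis funpow_Suc_right o_apply)

lemma funpow_nilpotent_leibniz:
  fixes D \<Delta> :: "'b::ab_group_add \<Rightarrow> 'b" and M :: "'b \<Rightarrow> 'b \<Rightarrow> 'b"
  assumes \<Delta>_closed: "\<And>x. x \<in> A \<Longrightarrow> \<Delta> x \<in> A"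
    and D_closed: "\<And>x. x \<in> A \<Longrightarrow> D x \<in> A"
    and D_add: "\<And>u v. u \<in> A \<Longrightarrow> v \<in> A \<Longrightarrow> D (u + v) = D u + D v"
    and M_closed: "\<And>x y. x \<in> A \<Longrightarrow> y \<in> A \<Longrightarrow> M x y \<in> A"
    and M_0: "\<And>y. M 0 y = 0" "\<And>x. M x 0 = 0"
    and D_0: "D 0 = 0"
    and leibniz: "\<And>x y. x \<in> A \<Longrightarrow> y \<in> A \<Longrightarrow> D (M x y) = M (\<Delta> x) y + M x (\<Delta> y)"
  shows "x \<in> A \<Longrightarrow> y \<in> A \<Longrightarrow> (\<Delta> ^^ a) x = 0 \<Longrightarrow> (\<Delta> ^^ b) y = 0 \<Longrightarrow> (D ^^ (a + b)) (M x y) = 0"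
proof (induct "a + b" arbitrary: x y a b)
  case 0
  then show ?case using M_0 by simp
next
  case (Suc n)
  show ?case
  proof (cases "a = 0 \<or> b = 0")
    case True
    then have "x = 0 \<or> y = 0" using Suc by auto
    then show ?thesis using M_0 funpow_fixes_0[of D] D_0 by auto
  next
    case False
    then obtain a' b' where ab: "a = Suc a'" "b = Suc b'"
      by (meson not0_implies_Suc)
    have n: "n = a' + b" "n = a + b'"
      using Suc(2) ab by simp_all
    have "(\<Delta> ^^ a') (\<Delta> x) = 0" "(\<Delta> ^^ b') (\<Delta> y) = 0"
      using Suc(5,6) ab by (simp_all only: funpow_Suc_apply)
    then have "(D ^^ n) (M (\<Delta> x) y) = 0" "(D ^^ n) (M x (\<Delta> y)) = 0"
      using Suc(1)[OF n(1) \<Delta>_closed[OF Suc(3)] Suc(4)] Suc(1)[OF n(2) Suc(3) \<Delta>_closed[OF Suc(4)]] Suc(5,6)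
      by (simp_all add: n[symmetric])
    moreover have "(D ^^ (a + b)) (M x y) = (D ^^ n) (M (\<Delta> x) y) + (D ^^ n) (M x (\<Delta> y))"
      unfolding Suc(2)[symmetric] funpow_Suc_apply
      using Suc(3,4) \<Delta>_closed by (simp add: leibniz funpow_add_closed[OF D_closed D_add] M_closed)
    ultimately show ?thesis by simp
  qed
qed

lemma exists_last_nonzero_iterate:
  fixes \<Delta> :: "'b::zero \<Rightarrow> 'b"
  assumes "(\<Delta> ^^ n) x = 0" and "x \<noteq> 0"
  shows "\<exists>a. (\<Delta> ^^ Suc a) x = 0 \<and> (\<Delta> ^^ a) x \<noteq> 0"
proof -
  define m where "m = (LEAST n. (\<Delta> ^^ n) x = 0)"
  have m: "(\<Delta> ^^ m) x = 0"
    unfolding m_def by (rule LeastI[of _ n]) (rule assms(1))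
  then obtain a where a: "m = Suc a"
    using assms(2) by (cases m) auto
  have "(\<Delta> ^^ a) x \<noteq> 0"
    using Least_le[of "\<lambda>n. (\<Delta> ^^ n) x = 0" a] a by (auto simp: m_def)
  then show ?thesis using m a by blast
qed

context
  fixes A :: "'b::comm_ring_1 set" and \<Delta> :: "'b \<Rightarrow> 'b"
  assumes closed: "\<And>x. x \<in> A \<Longrightarrow> \<Delta> x \<in> A"
    and mult_closed: "\<And>x y. x \<in> A \<Longrightarrow> y \<in> A \<Longrightarrow> x * y \<in> A"
    and add: "\<And>x y. x \<in> A \<Longrightarrow> y \<in> A \<Longrightarrow> \<Delta> (x + y) = \<Delta> x + \<Delta> y"
    and leibniz: "\<And>x y. x \<in> A \<Longrightarrow> y \<in> A \<Longrightarrow> \<Delta> (x * y) = x * \<Delta> y + y * \<Delta> x"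
begin

lemma funpow_der_mult_kernel:
  assumes "f \<in> A" "\<Delta> f = 0" "u \<in> A"
  shows "(\<Delta> ^^ k) (f * u) = f * (\<Delta> ^^ k) u"
  by (induct k) (simp_all add: assms leibniz funpow_closed[OF closed])

lemma funpow_der_mult_top_term:
  shows "f \<in> A \<Longrightarrow> g \<in> A \<Longrightarrow> (\<Delta> ^^ Suc a) f = 0 \<Longrightarrow> (\<Delta> ^^ Suc b) g = 0 \<Longrightarrow>
    \<exists>c::nat. c > 0 \<and> (\<Delta> ^^ (a + b)) (f * g) = of_nat c * ((\<Delta> ^^ a) f * (\<Delta> ^^ b) g)"
proof (induct "a + b" arbitrary: f g a b)
  case 0
  then show ?case by (intro exI[of _ 1]) simp
next
  case (Suc n)
  consider "a = 0" | "b = 0" | a' b' where "a = Suc a'" "b = Suc b'"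
    by (meson not0_implies_Suc)
  then show ?case
  proof cases
    case 1
    then show ?thesis
      using funpow_der_mult_kernel[of f g "a + b"] Suc(3-5) by (intro exI[of _ 1]) simp
  next
    case 2
    then show ?thesis
      using funpow_der_mult_kernel[of g f "a + b"] Suc(3,4,6) by (intro exI[of _ 1]) (simp add: mult.commute)
  next
    case 3
    have n: "n = a' + b" "n = a + b'"
      using Suc(2) 3 by simp_all
    have iter: "(\<Delta> ^^ Suc a') (\<Delta> f) = 0" "(\<Delta> ^^ Suc b') (\<Delta> g) = 0"
      "(\<Delta> ^^ a') (\<Delta> f) = (\<Delta> ^^ a) f" "(\<Delta> ^^ b') (\<Delta> g) = (\<Delta> ^^ b) g"
      using Suc(5,6) 3 by (simp_all only: funpow_Suc_apply)
    obtain c1 where c1: "c1 > 0" "(\<Delta> ^^ n) (\<Delta> f * g) = of_nat c1 * ((\<Delta> ^^ a) f * (\<Delta> ^^ b) g)"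
      using Suc(1)[OF n(1) closed[OF Suc(3)] Suc(4) iter(1) Suc(6)] by (auto simp: iter(3) n(1))
    obtain c2 where c2: "c2 > 0" "(\<Delta> ^^ n) (f * \<Delta> g) = of_nat c2 * ((\<Delta> ^^ a) f * (\<Delta> ^^ b) g)"
      using Suc(1)[OF n(2) Suc(3) closed[OF Suc(4)] Suc(5) iter(2)] by (auto simp: iter(4) n(2))
    have "(\<Delta> ^^ (a + b)) (f * g) = (\<Delta> ^^ n) (\<Delta> f * g) + (\<Delta> ^^ n) (f * \<Delta> g)"
      unfolding Suc(2)[symmetric] funpow_Suc_apply
      using Suc(3,4) closed
      by (simp add: leibniz mult_closed funpow_add_closed[OF closed add] mult.commute)
    then show ?thesis
      using c1 c2 by (intro exI[of _ "c1 + c2"]) (simp add: algebra_simps)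
  qed
qed

end

context quadratic_surface
begin

definition model_lnd :: "('a lpoly \<Rightarrow> 'a lpoly) \<Rightarrow> bool" where
  "model_lnd \<Delta> \<longleftrightarrow> (\<forall>f \<in> model. \<exists>n. (\<Delta> ^^ n) f = 0)"

lemma funpow_model_der_mult_top_term:
  assumes "model_der \<Delta>"
  shows "f \<in> model \<Longrightarrow> g \<in> model \<Longrightarrow> (\<Delta> ^^ Suc a) f = 0 \<Longrightarrow> (\<Delta> ^^ Suc b) g = 0 \<Longrightarrow>
    \<exists>c::nat. c > 0 \<and> (\<Delta> ^^ (a + b)) (f * g) = of_nat c * ((\<Delta> ^^ a) f * (\<Delta> ^^ b) g)"
  by (rule funpow_der_mult_top_term)
     (use assms in \<open>simp_all add: model_der_in_model model_mult model_der_add model_der_mult\<close>)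

lemma lnd_plus_mult_nonzero:
  assumes d: "model_der \<Delta>" and lnd: "model_lnd \<Delta>"
    and \<delta>: "\<delta> \<in> model" "\<delta> \<noteq> 0" and h: "h \<in> model" "h \<noteq> 0"
  shows "\<Delta> h + \<delta> * h \<noteq> 0"
proof
  assume eq0: "\<Delta> h + \<delta> * h = 0"
  obtain n1 n2 where "(\<Delta> ^^ n1) \<delta> = 0" "(\<Delta> ^^ n2) h = 0"
    using lnd \<delta>(1) h(1) by (meson model_lnd_def)
  then obtain a b where a: "(\<Delta> ^^ Suc a) \<delta> = 0" "(\<Delta> ^^ a) \<delta> \<noteq> 0"
    and b: "(\<Delta> ^^ Suc b) h = 0" "(\<Delta> ^^ b) h \<noteq> 0"
    using exists_last_nonzero_iterate \<delta>(2) h(2) by metis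
  \<comment> \<open>\<open>\<Delta>\<^sup>a\<^sup>+\<^sup>b\<close> kills \<open>\<Delta> h\<close> but not \<open>\<delta> h\<close>.\<close>
  obtain c :: nat where "c > 0" "(\<Delta> ^^ (a + b)) (\<delta> * h) = of_nat c * ((\<Delta> ^^ a) \<delta> * (\<Delta> ^^ b) h)"
    using funpow_model_der_mult_top_term[OF d \<delta>(1) h(1) a(1) b(1)] by blast
  then have "(\<Delta> ^^ (a + b)) (\<delta> * h) \<noteq> 0"
    using a(2) b(2) by simp
  moreover have "(\<Delta> ^^ (a + b)) (\<Delta> h) = (\<Delta> ^^ a) ((\<Delta> ^^ Suc b) h)"
    by (simp only: funpow_add funpow_Suc_apply o_apply)
  then have "(\<Delta> ^^ (a + b)) (\<Delta> h) = 0"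
    using b(1) funpow_fixes_0[of \<Delta>] model_der_0[OF d] by simp
  moreover have "(\<Delta> ^^ (a + b)) (\<Delta> h + \<delta> * h) = (\<Delta> ^^ (a + b)) (\<Delta> h) + (\<Delta> ^^ (a + b)) (\<delta> * h)"
    using d h \<delta> by (intro funpow_add_closed[of model]) (auto simp: model_der_in_model model_der_add model_mult)
  ultimately show False
    using eq0 funpow_fixes_0[of \<Delta>] model_der_0[OF d] by simp
qed

text \<open>If \<open>\<delta> = div \<Delta> \<noteq> 0\<close>, the operator \<open>T = \<Delta> + \<delta>\<close> is injective on the model but satisfies a
  Leibniz rule for the Poisson bracket, hence is nilpotent on \<open>{z, t} = t\<close>.\<close>

lemma divergence_eq_0_if_lnd:
  assumes d: "model_der \<Delta>" and lnd: "model_lnd \<Delta>"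
  shows "divergence \<Delta> = 0"
proof (rule ccontr)
  assume nz: "divergence \<Delta> \<noteq> 0"
  define T where "T = (\<lambda>u. \<Delta> u + divergence \<Delta> * u)"
  have T_closed: "T u \<in> model" if "u \<in> model" for u
    using d that by (simp add: T_def model_add model_mult model_der_in_model divergence_in_model)
  have T_iter: "(T ^^ n) tvar \<noteq> 0 \<and> (T ^^ n) tvar \<in> model" for n
  proof (induct n)
    case (Suc n)
    then show ?case
      using lnd_plus_mult_nonzero[OF d lnd divergence_in_model[OF d] nz] T_closed by (simp add: T_def)
  qed (simp add: tvar_nonzero model_tvar)
  obtain a where a: "(\<Delta> ^^ a) zvar = 0"
    using lnd model_zvar by (auto simp: model_lnd_def)
  obtain b where b: "(\<Delta> ^^ b) tvar = 0"
    using lnd model_tvar by (auto simp: model_lnd_def)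
  have T_add: "T (u + v) = T u + T v" if "u \<in> model" "v \<in> model" for u v
    using d that by (simp add: T_def model_der_add algebra_simps)
  have T_0: "T 0 = 0"
    using d by (simp add: T_def model_der_0)
  have T_leibniz: "T (poisson x y) = poisson (\<Delta> x) y + poisson x (\<Delta> y)" if "x \<in> model" "y \<in> model" for x y
    using model_der_poisson_identity[OF d that] by (simp add: T_def)
  have "(T ^^ (a + b)) (poisson zvar tvar) = 0"
    by (rule funpow_nilpotent_leibniz[of model \<Delta> T poisson, OF model_der_in_model[OF d] T_closed T_add
          model_poisson poisson_0 T_0 T_leibniz model_zvar model_tvar a b])
  then show False
    using T_iter[of "a + b"] by (simp add: poisson_zvar_tvar)
qed

lemma bracket_coeffs_zvar:
  assumes "zderiv a1 = - euler b1" "zderiv a2 = - euler b2"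
  shows "(a1 * zderiv a2 + b1 * euler a2) - (a2 * zderiv a1 + b2 * euler a1) = - euler (a1 * b2 - a2 * b1)"
  using assms by (simp add: euler_mult euler_diff algebra_simps)

lemma bracket_coeffs_tvar:
  assumes "zderiv a1 = - euler b1" "zderiv a2 = - euler b2"
  shows "(a1 * zderiv (b2 * tvar) + b1 * euler (b2 * tvar)) - (a2 * zderiv (b1 * tvar) + b2 * euler (b1 * tvar))
    = zderiv (a1 * b2 - a2 * b1) * tvar"
  using assms by (simp add: euler_mult zderiv_mult zderiv_diff algebra_simps)

lemma model_der_eqI:
  assumes "model_der \<Delta>1" "model_der \<Delta>2" "\<Delta>1 zvar = \<Delta>2 zvar" "\<Delta>1 tvar = \<Delta>2 tvar" "f \<in> model"
  shows "\<Delta>1 f = \<Delta>2 f"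
  using model_der_normal_form[OF assms(1,5)] model_der_normal_form[OF assms(2,5)] assms(3,4)
  by (simp add: zcoeff_def ecoeff_def)

definition bracket_ham :: "('a lpoly \<Rightarrow> 'a lpoly) \<Rightarrow> ('a lpoly \<Rightarrow> 'a lpoly) \<Rightarrow> 'a lpoly" where
  "bracket_ham \<Delta>1 \<Delta>2 = zcoeff \<Delta>1 * ecoeff \<Delta>2 - zcoeff \<Delta>2 * ecoeff \<Delta>1"

lemma model_der_yvar: "model_der \<Delta> \<Longrightarrow> \<Delta> yvar = zcoeff \<Delta> * zderiv yvar - ecoeff \<Delta> * yvar"
  using model_der_normal_form[of \<Delta> yvar] by (simp add: model_yvar)

lemma bracket_ham_in_model:
  assumes d1: "model_der \<Delta>1" and d2: "model_der \<Delta>2"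
  shows "bracket_ham \<Delta>1 \<Delta>2 \<in> model"
proof (rule model_bezout)
  let ?h = "bracket_ham \<Delta>1 \<Delta>2"
  note in_model = model_der_in_model[OF d1] model_der_in_model[OF d2]
  have t: "\<Delta>1 tvar = ecoeff \<Delta>1 * tvar" "\<Delta>2 tvar = ecoeff \<Delta>2 * tvar"
    by (simp_all add: ecoeff_mult_tvar)
  have "?h * tvar = zcoeff \<Delta>1 * \<Delta>2 tvar - zcoeff \<Delta>2 * \<Delta>1 tvar"
    by (simp add: bracket_ham_def t algebra_simps)
  then show "?h * tvar \<in> model"
    by (simp add: zcoeff_def model_diff model_mult in_model model_zvar model_tvar)
  have "?h * yvar = zcoeff \<Delta>2 * \<Delta>1 yvar - zcoeff \<Delta>1 * \<Delta>2 yvar"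
    by (simp add: bracket_ham_def model_der_yvar d1 d2 algebra_simps)
  then show "?h * yvar \<in> model"
    by (simp add: zcoeff_def model_diff model_mult in_model model_zvar model_yvar)
  have "?h * zpoly (pderiv p) = \<Delta>2 tvar * \<Delta>1 yvar - \<Delta>1 tvar * \<Delta>2 yvar"
    by (simp add: bracket_ham_def model_der_yvar d1 d2 t algebra_simps flip: tvar_zderiv_yvar)
  then show "?h * zpoly (pderiv p) \<in> model"
    by (simp add: model_diff model_mult in_model model_tvar model_yvar)
qed

lemma commutator_eq_poisson_bracket_ham:
  assumes d1: "model_der \<Delta>1" and d2: "model_der \<Delta>2"
    and div1: "divergence \<Delta>1 = 0" and div2: "divergence \<Delta>2 = 0" and f: "f \<in> model"
  shows "\<Delta>1 (\<Delta>2 f) - \<Delta>2 (\<Delta>1 f) = poisson (bracket_ham \<Delta>1 \<Delta>2) f"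
proof (rule model_der_eqI[OF model_der_commutator[OF d1 d2] model_der_poisson[OF bracket_ham_in_model[OF d1 d2]] _ _ f])
  let ?a1 = "zcoeff \<Delta>1" and ?a2 = "zcoeff \<Delta>2" and ?b1 = "ecoeff \<Delta>1" and ?b2 = "ecoeff \<Delta>2"
  have e: "zderiv ?a1 = - euler ?b1" "zderiv ?a2 = - euler ?b2"
    using div1 div2 by (simp_all add: divergence_def eq_neg_iff_add_eq_0)
  have t: "\<Delta>1 tvar = ?b1 * tvar" "\<Delta>2 tvar = ?b2 * tvar"
    by (simp_all add: ecoeff_mult_tvar)
  have "?a1 \<in> model" "?a2 \<in> model" "?b1 * tvar \<in> model" "?b2 * tvar \<in> model"
    using d1 d2 by (simp_all add: zcoeff_def ecoeff_mult_tvar model_der_in_model model_zvar model_tvar)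
  then have "\<Delta>1 (\<Delta>2 zvar) = ?a1 * zderiv ?a2 + ?b1 * euler ?a2"
    "\<Delta>2 (\<Delta>1 zvar) = ?a2 * zderiv ?a1 + ?b2 * euler ?a1"
    "\<Delta>1 (\<Delta>2 tvar) = ?a1 * zderiv (?b2 * tvar) + ?b1 * euler (?b2 * tvar)"
    "\<Delta>2 (\<Delta>1 tvar) = ?a2 * zderiv (?b1 * tvar) + ?b2 * euler (?b1 * tvar)"
    using model_der_normal_form[OF d1] model_der_normal_form[OF d2]
    by (simp_all add: zcoeff_def t)
  then show "\<Delta>1 (\<Delta>2 zvar) - \<Delta>2 (\<Delta>1 zvar) = poisson (bracket_ham \<Delta>1 \<Delta>2) zvar"
    and "\<Delta>1 (\<Delta>2 tvar) - \<Delta>2 (\<Delta>1 tvar) = poisson (bracket_ham \<Delta>1 \<Delta>2) tvar"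
    using bracket_coeffs_zvar[OF e] bracket_coeffs_tvar[OF e]
    by (simp_all add: poisson_zvar poisson_tvar bracket_ham_def)
qed

end


section \<open>The derived algebra consists of Hamiltonian fields\<close>

context quadratic_surface
begin

lemma model_lnd_iff_is_lnd:
  assumes D: "is_vfield p D"
  shows "model_lnd (der_of D) \<longleftrightarrow> is_lnd p D"
proof -
  have "(D ^^ n) (fun_of h) = (\<lambda>_. 0) \<longleftrightarrow> (der_of D ^^ n) h = 0" if "h \<in> model" for h n
    using funpow_fun_of[OF D that, of n] fun_of_inj[of _ 0] fun_of_zero by auto
  then show ?thesis
    using D unfolding model_lnd_def is_lnd_def
    by (metis fun_of_in_coord_ring model_of_in_model fun_of_model_of)
qed

definition div_free :: "'a vfield \<Rightarrow> bool" where
  "div_free D \<longleftrightarrow> is_vfield p D \<and> divergence (der_of D) = 0"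

lemma divergence_eq:
  "divergence \<Delta> = zderiv (\<Delta> zvar) + euler (\<Delta> tvar * tinv)"
  by (simp add: divergence_def zcoeff_def ecoeff_def)

lemma div_free_if_lnd: "is_lnd p D \<Longrightarrow> div_free D"
  using divergence_eq_0_if_lnd model_der_der_of model_lnd_iff_is_lnd
  by (auto simp: div_free_def is_lnd_def)

lemma div_free_vfield_of:
  assumes "model_der \<Delta>"
  shows "div_free (vfield_of \<Delta>) \<longleftrightarrow> divergence \<Delta> = 0"
  using assms by (simp add: div_free_def is_vfield_vfield_of divergence_eq der_of_vfield_of
      model_zvar model_tvar)

lemma div_free_zero: "div_free vf_zero"
  by (simp add: vf_zero_eq_vfield_of div_free_vfield_of model_der_def divergence_eq)

lemma div_free_add:
  assumes D: "div_free D" and E: "div_free E"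
  shows "div_free (vf_add D E)"
proof -
  have v: "is_vfield p D" "is_vfield p E"
    and div: "divergence (der_of D) = 0" "divergence (der_of E) = 0"
    using D E by (simp_all add: div_free_def)
  note d = model_der_der_of[OF v(1)] model_der_der_of[OF v(2)]
  have eq: "vf_add D E = vfield_of (\<lambda>h. der_of D h + der_of E h)"
    using vf_add_vfield_of[OF d] by (simp add: vfield_of_der_of v)
  show ?thesis
    using div unfolding eq div_free_vfield_of[OF model_der_sum[OF d]]
    by (simp add: divergence_eq zderiv_add euler_add distrib_right add_ac)
qed

lemma div_free_smult:
  assumes D: "div_free D"
  shows "div_free (vf_smult c D)"
proof -
  have v: "is_vfield p D" and div: "divergence (der_of D) = 0"
    using D by (simp_all add: div_free_def)
  note d = model_der_der_of[OF v]
  have eq: "vf_smult c D = vfield_of (\<lambda>h. zpoly [:c:] * der_of D h)"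
    using vf_smult_vfield_of[OF d] by (simp add: vfield_of_der_of v)
  show ?thesis
    using div unfolding eq div_free_vfield_of[OF model_der_scale[OF d]]
    by (simp add: divergence_eq zderiv_mult euler_mult zderiv_zpoly mult.assoc flip: distrib_left)
qed

lemma div_free_ham: "h \<in> model \<Longrightarrow> div_free (ham h)"
  unfolding ham_def
  by (simp add: div_free_vfield_of model_der_poisson divergence_eq poisson_zvar poisson_tvar
      mult.assoc tvar_tinv zderiv_uminus euler_zderiv)

lemma vf_bracket_div_free:
  assumes D: "div_free D" and E: "div_free E"
  shows "vf_bracket D E = ham (bracket_ham (der_of D) (der_of E))"
proof -
  have v: "is_vfield p D" "is_vfield p E" and div: "divergence (der_of D) = 0" "divergence (der_of E) = 0"
    using D E by (simp_all add: div_free_def)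
  note d = model_der_der_of[OF v(1)] model_der_der_of[OF v(2)]
  have "vf_bracket D E = vfield_of (\<lambda>h. der_of D (der_of E h) - der_of E (der_of D h))"
    using vf_bracket_vfield_of[OF d] by (simp add: vfield_of_der_of v)
  also have "\<dots> = ham (bracket_ham (der_of D) (der_of E))"
    unfolding ham_def by (rule vfield_of_cong) (rule commutator_eq_poisson_bracket_ham[OF d div])
  finally show ?thesis .
qed

lemma div_free_if_in_lie_lnd: "D \<in> lie_lnd p \<Longrightarrow> div_free D"
proof (induct rule: lie_lnd.induct)
  case (ll_bracket D E)
  then show ?case
    using div_free_ham bracket_ham_in_model model_der_der_of vf_bracket_div_free
    by (simp add: div_free_def)
qed (simp_all add: div_free_if_lnd div_free_zero div_free_add div_free_smult)

lemma derived_lie_lnd_ham: "a \<in> derived (lie_lnd p) \<Longrightarrow> \<exists>h \<in> model. a = ham h"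
proof (induct rule: derived.induct)
  case (der_br D E)
  then show ?case
    using div_free_if_in_lie_lnd vf_bracket_div_free bracket_ham_in_model model_der_der_of
    by (meson div_free_def)
next
  case der_zero
  then show ?case using ham_0 model_0 by metis
next
  case (der_add D E)
  then show ?case using vf_add_ham model_add by metis
next
  case (der_smult D c)
  then show ?case using vf_smult_ham model_mult model_zpoly by metis
qed

end


section \<open>Locally nilpotent derivations generate all Hamiltonian fields\<close>

lemma exists_antiderivative: "\<exists>B. pderiv B = (b :: 'a::field_char_0 poly)"
proof -
  define B where "B = (\<Sum>i\<le>degree b. monom (coeff b i / of_nat (Suc i)) (Suc i))"
  have "pderiv B = (\<Sum>i\<le>degree b. monom (coeff b i) i)"
    unfolding B_def higher_pderiv_sum[of 1, simplified]
    by (rule sum.cong) (simp_all add: pderiv_monom del: of_nat_Suc)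
  then show ?thesis
    using poly_as_sum_of_monoms by metis
qed

context quadratic_surface
begin

lemma model_lnd_if_nilpotent_on_generators:
  assumes d: "model_der \<Delta>"
    and nil: "(\<Delta> ^^ n1) tvar = 0" "(\<Delta> ^^ n2) yvar = 0" "(\<Delta> ^^ n3) zvar = 0"
  shows "model_lnd \<Delta>"
  unfolding model_lnd_def
proof
  fix f assume "f \<in> model"
  then show "\<exists>n. (\<Delta> ^^ n) f = 0"
  proof (induct f rule: model_induct_generators)
    case (const c)
    have "(\<Delta> ^^ 1) (zpoly [:c:]) = 0"
      using d by (simp add: model_der_const)
    then show ?case by blast
  next
    case (add f g)
    then obtain a b where "(\<Delta> ^^ a) f = 0" "(\<Delta> ^^ b) g = 0"
      by blast
    then have "(\<Delta> ^^ (b + a)) f = 0" "(\<Delta> ^^ (a + b)) g = 0"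
      using funpow_fixes_0[of \<Delta>] model_der_0[OF d] by (simp_all add: funpow_add)
    then have "(\<Delta> ^^ (a + b)) (f + g) = 0"
      using add d by (simp add: funpow_add_closed[of model] model_der_in_model model_der_add add.commute)
    then show ?case by blast
  next
    case (mult f g)
    then obtain a b where "(\<Delta> ^^ a) f = 0" "(\<Delta> ^^ b) g = 0"
      by blast
    then have "(\<Delta> ^^ (a + b)) (f * g) = 0"
      by (rule funpow_nilpotent_leibniz[of model \<Delta> \<Delta> times, rotated -4, OF mult(1,2)])
         (simp_all add: d model_der_in_model model_der_add model_mult model_der_0 model_der_mult algebra_simps)
    then show ?case by blast
  qed (use nil in blast)+
qed

lemma model_lnd_poisson_tvar: "model_lnd (poisson tvar)"
proof (rule model_lnd_if_nilpotent_on_generators[OF model_der_poisson[OF model_tvar]])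
  show "(poisson tvar ^^ 1) tvar = 0"
    by (simp add: poisson_tvar_left)
  show "(poisson tvar ^^ 3) yvar = 0"
    by (simp add: numeral_3_eq_3 poisson_tvar_left tvar_zderiv_yvar zderiv_uminus zderiv_zpoly zderiv_mult
        pderiv_pderiv_pderiv_p)
  show "(poisson tvar ^^ 2) zvar = 0"
    by (simp add: numeral_2_eq_2 poisson_tvar_left zderiv_uminus)
qed

lemma model_lnd_poisson_yvar: "model_lnd (poisson yvar)"
proof (rule model_lnd_if_nilpotent_on_generators[OF model_der_poisson[OF model_yvar]])
  show "(poisson yvar ^^ 3) tvar = 0"
    by (simp add: numeral_3_eq_3 poisson_yvar_left mult.commute[of "zderiv yvar" tvar] tvar_zderiv_yvar
        zderiv_zpoly zderiv_mult euler_mult pderiv_pderiv_pderiv_p)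
  show "(poisson yvar ^^ 1) yvar = 0"
    by (simp add: poisson_yvar_left)
  show "(poisson yvar ^^ 2) zvar = 0"
    by (simp add: numeral_2_eq_2 poisson_yvar_left)
qed

lemma model_lnd_kernel_mult:
  assumes d: "model_der \<Delta>" and lnd: "model_lnd \<Delta>" and w: "w \<in> model" "\<Delta> w = 0"
  shows "model_lnd (\<lambda>f. w * \<Delta> f)"
proof -
  have "\<Delta> (w ^ m) = 0" for m
    using d w by (induct m) (simp_all add: model_der_1 model_der_mult model_power)
  then have iter: "((\<lambda>f. w * \<Delta> f) ^^ m) f = w ^ m * (\<Delta> ^^ m) f" if "f \<in> model" for f m
    using d w that by (induct m) (simp_all add: model_der_mult model_power model_der_funpow_in_model algebra_simps)
  show ?thesis
    using lnd unfolding model_lnd_def by (metis iter mult_zero_right)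
qed

lemma model_lnd_poisson_power:
  assumes w: "w \<in> model" and lnd: "model_lnd (poisson w)" and comm: "poisson w (w ^ k) = 0"
  shows "model_lnd (poisson (w ^ Suc k))"
proof -
  have eq: "poisson (w ^ Suc k) = (\<lambda>f. (of_nat (Suc k) * w ^ k) * poisson w f)"
    by (rule ext) (rule poisson_power_left)
  show ?thesis
    unfolding eq
  proof (rule model_lnd_kernel_mult[OF model_der_poisson[OF w] lnd])
    show "of_nat (Suc k) * w ^ k \<in> model"
      unfolding zpoly_of_nat[symmetric] using w by (intro model_mult model_zpoly model_power)
    show "poisson w (of_nat (Suc k) * w ^ k) = 0"
      unfolding zpoly_of_nat[symmetric] using comm by (simp add: poisson_mult_right poisson_const_right)
  qed
qed

lemma is_lnd_ham:
  assumes h: "h \<in> model" and lnd: "model_lnd (poisson h)"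
  shows "is_lnd p (ham h)"
proof -
  have "der_of (ham h) f = poisson h f" if "f \<in> model" for f
    using der_of_ham[OF h that] .
  then have "((der_of (ham h)) ^^ n) f = (poisson h ^^ n) f" if "f \<in> model" for f n
    using that h by (induct n) (simp_all add: model_der_funpow_in_model model_der_poisson)
  then have "model_lnd (der_of (ham h))"
    using lnd by (simp add: model_lnd_def)
  then show ?thesis
    using model_lnd_iff_is_lnd[OF is_vfield_ham[OF h]] by simp
qed

lemma is_lnd_ham_tvar_power: "is_lnd p (ham (tvar ^ Suc k))"
  by (rule is_lnd_ham[OF model_power[OF model_tvar] model_lnd_poisson_power[OF model_tvar model_lnd_poisson_tvar]])
     (simp add: poisson_tvar_left)

lemma is_lnd_ham_yvar_power: "is_lnd p (ham (yvar ^ Suc k))"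
proof -
  have "poisson yvar (yvar ^ k) = 0"
    by (induct k) (simp_all add: poisson_mult_right poisson_yvar_left)
  then show ?thesis
    by (rule is_lnd_ham[OF model_power[OF model_yvar] model_lnd_poisson_power[OF model_yvar model_lnd_poisson_yvar]])
qed

definition ham_in_lie :: "'a lpoly \<Rightarrow> bool" where
  "ham_in_lie h \<longleftrightarrow> h \<in> model \<and> ham h \<in> lie_lnd p"

lemma ham_in_lie_add: "ham_in_lie a \<Longrightarrow> ham_in_lie b \<Longrightarrow> ham_in_lie (a + b)"
  unfolding ham_in_lie_def using vf_add_ham model_add lie_lnd.ll_add by metis

lemma ham_in_lie_const_mult: "ham_in_lie a \<Longrightarrow> ham_in_lie (zpoly [:c:] * a)"
  unfolding ham_in_lie_def using vf_smult_ham model_mult model_zpoly lie_lnd.ll_smult by metis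

lemma ham_in_lie_poisson: "ham_in_lie a \<Longrightarrow> ham_in_lie b \<Longrightarrow> ham_in_lie (poisson a b)"
  unfolding ham_in_lie_def using vf_bracket_ham model_poisson lie_lnd.ll_bracket by metis

lemma ham_in_lie_const: "ham_in_lie (zpoly [:c:])"
  unfolding ham_in_lie_def using ham_const model_zpoly lie_lnd.ll_zero by metis

lemma ham_in_lie_uminus: "ham_in_lie a \<Longrightarrow> ham_in_lie (- a)"
  using ham_in_lie_const_mult[of a "-1"] by (simp add: zpoly_minus_1_mult)

lemma ham_in_lie_diff: "ham_in_lie a \<Longrightarrow> ham_in_lie b \<Longrightarrow> ham_in_lie (a - b)"
  using ham_in_lie_add[of a "- b"] ham_in_lie_uminus by simp

lemma ham_in_lie_tvar_power: "ham_in_lie (tvar ^ Suc k)"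
  unfolding ham_in_lie_def using is_lnd_ham_tvar_power lie_lnd.ll_gen model_power model_tvar by blast

lemma ham_in_lie_yvar_power: "ham_in_lie (yvar ^ Suc k)"
  unfolding ham_in_lie_def using is_lnd_ham_yvar_power lie_lnd.ll_gen model_power model_yvar by blast

lemma ham_in_lie_cancel_const:
  assumes "ham_in_lie a" "ham_in_lie b" "c \<noteq> 0" "a = zpoly [:k:] * b + zpoly [:c:] * x"
  shows "ham_in_lie x"
proof -
  have "x = zpoly [:1 / c:] * (a - zpoly [:k:] * b)"
    using assms(3,4) by (simp add: algebra_simps mult.assoc[symmetric] flip: zpoly_mult)
  then show ?thesis
    using assms(1,2) by (simp add: ham_in_lie_const_mult ham_in_lie_diff)
qed

lemma zpoly_pderiv_p: "zpoly (pderiv p) = zpoly [:c1:] * 1 + zpoly [:2 * c2:] * zvar"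
proof -
  have "pderiv p = [:c1:] + [:2 * c2:] * [:0, 1:]"
    by (simp add: pderiv_p)
  then show ?thesis
    by (simp add: zvar_def flip: zpoly_add zpoly_mult)
qed

lemma ham_in_lie_zvar: "ham_in_lie zvar"
proof (rule ham_in_lie_cancel_const)
  show "ham_in_lie (zpoly (pderiv p))"
    using ham_in_lie_uminus[OF ham_in_lie_poisson[OF ham_in_lie_tvar_power[of 0] ham_in_lie_yvar_power[of 0]]]
    by (simp add: poisson_tvar_yvar)
  show "ham_in_lie 1"
    using ham_in_lie_const[of 1] by simp
qed (use c2_nonzero zpoly_pderiv_p in auto)

lemma ham_in_lie_tvar_zvar: "ham_in_lie (tvar * zvar)"
proof (rule ham_in_lie_cancel_const)
  have "poisson (tvar ^ Suc 1) yvar = zpoly [:of_nat (Suc 1):] * tvar * - zpoly (pderiv p)"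
    by (simp only: poisson_power_left poisson_tvar_yvar zpoly_of_nat power_one_right)
  then have "tvar * zpoly (pderiv p) = zpoly [:-1/2:] * poisson (tvar ^ Suc 1) yvar"
    by (simp add: mult.assoc[symmetric] zpoly_minus_1_mult flip: zpoly_mult)
  then show "ham_in_lie (tvar * zpoly (pderiv p))"
    using ham_in_lie_const_mult[OF ham_in_lie_poisson[OF ham_in_lie_tvar_power ham_in_lie_yvar_power[of 0]]]
    by (simp only: power_Suc0_right)
  show "ham_in_lie tvar"
    using ham_in_lie_tvar_power[of 0] by simp
qed (use c2_nonzero in \<open>auto simp: zpoly_pderiv_p algebra_simps\<close>)

lemma poisson_tvar_zpoly_yvar_zpoly:
  "poisson (tvar * zpoly a) (yvar * zpoly b) = - zpoly (pderiv (a * b * p))"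
proof -
  have "poisson (tvar * zpoly a) (yvar * zpoly b) =
      - ((tvar * yvar) * (zpoly (pderiv a) * zpoly b + zpoly a * zpoly (pderiv b)) + (tvar * zderiv yvar) * (zpoly a * zpoly b))"
    by (simp add: poisson_def zderiv_mult euler_mult zderiv_zpoly algebra_simps)
  also have "\<dots> = - zpoly (pderiv (a * b * p))"
    by (simp add: tvar_yvar tvar_zderiv_yvar pderiv_mult algebra_simps flip: zpoly_mult zpoly_add)
  finally show ?thesis .
qed

lemma ham_in_lie_zpoly_sum: "(\<And>i. i \<in> A \<Longrightarrow> ham_in_lie (zpoly (f i))) \<Longrightarrow> ham_in_lie (zpoly (\<Sum>i\<in>A. f i))"
  by (induct A rule: infinite_finite_induct)
     (simp_all add: zpoly_add ham_in_lie_add ham_in_lie_const[of 0, simplified])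

lemma ham_in_lie_zpoly_smult: "ham_in_lie (zpoly q) \<Longrightarrow> ham_in_lie (zpoly (smult c q))"
  using ham_in_lie_const_mult[of "zpoly q" c] by (simp flip: zpoly_mult)

lemma ham_in_lie_yvar_mult_pderiv: "ham_in_lie (zpoly b) \<Longrightarrow> ham_in_lie (yvar * zpoly (pderiv b))"
proof -
  assume "ham_in_lie (zpoly b)"
  then have "ham_in_lie (- poisson (zpoly b) (yvar ^ Suc 0))"
    by (intro ham_in_lie_uminus ham_in_lie_poisson ham_in_lie_yvar_power)
  then show ?thesis
    unfolding poisson_zpoly_left power_Suc0_right euler_yvar by (simp add: mult.commute)
qed

lemma ham_in_lie_zpoly_pderiv_zvar_mult:
  "ham_in_lie (zpoly b) \<Longrightarrow> ham_in_lie (zpoly (pderiv ([:0, 1:] * pderiv b * p)))"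
  using ham_in_lie_uminus[OF ham_in_lie_poisson[OF ham_in_lie_tvar_zvar[unfolded zvar_def]
        ham_in_lie_yvar_mult_pderiv]]
  by (simp only: poisson_tvar_zpoly_yvar_zpoly minus_minus mult.assoc)

lemma pderiv_monom_mult_p:
  "pderiv (monom 1 (Suc k) * p) = monom (of_nat (Suc k) * c0) k + monom (of_nat (Suc (Suc k)) * c1) (Suc k)
      + monom (of_nat (Suc (Suc (Suc k))) * c2) (Suc (Suc k))"
proof -
  have p_monoms: "p = monom c0 0 + monom c1 1 + monom c2 2"
    by (subst p_eq) (simp add: monom_altdef numeral_2_eq_2 algebra_simps)
  have "monom 1 (Suc k) * p = monom c0 (Suc k) + monom c1 (Suc (Suc k)) + monom c2 (Suc (Suc (Suc k)))"
    by (subst p_monoms) (simp only: distrib_left mult_monom mult_1 add_0_right, simp)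
  then show ?thesis
    by (simp only: pderiv_add pderiv_monom diff_Suc_1)
qed

text \<open>Induction on the degree: \<open>{t z, y B'(z)} = -(z B p)'\<close> has leading term \<open>z\<^sup>k\<^sup>+\<^sup>2\<close> when \<open>B' = z\<^sup>k\<close>.\<close>

lemma ham_in_lie_zpoly_monom: "ham_in_lie (zpoly (monom 1 n)) \<and> ham_in_lie (zpoly (monom 1 (Suc n)))"
proof (induct n)
  case 0
  have "monom (1 :: 'a) (Suc 0) = [:0, 1:]"
    by (simp add: monom_Suc)
  then show ?case
    using ham_in_lie_const[of 1] ham_in_lie_zvar by (simp add: zvar_def one_pCons monom_0)
next
  case (Suc k)
  then have k: "ham_in_lie (zpoly (monom 1 k))" and k1: "ham_in_lie (zpoly (monom 1 (Suc k)))"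
    by auto
  have monoms: "ham_in_lie (zpoly (monom c k))" "ham_in_lie (zpoly (monom c (Suc k)))" for c
    using ham_in_lie_zpoly_smult[OF k, of c] ham_in_lie_zpoly_smult[OF k1, of c] by (simp_all add: smult_monom)
  have "pderiv (monom (1 / of_nat (Suc k)) (Suc k)) = monom (1 :: 'a) k"
    by (simp add: pderiv_monom del: of_nat_Suc)
  then have "[:0, 1:] * pderiv (monom (1 / of_nat (Suc k)) (Suc k)) = monom (1 :: 'a) (Suc k)"
    by (simp add: monom_Suc)
  then have "ham_in_lie (zpoly (pderiv (monom 1 (Suc k) * p)))"
    using ham_in_lie_zpoly_pderiv_zvar_mult[OF monoms(2)] by metis
  then have "ham_in_lie (zpoly (monom (of_nat (Suc k) * c0) k + monom (of_nat (Suc (Suc k)) * c1) (Suc k)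
      + monom (of_nat (Suc (Suc (Suc k))) * c2) (Suc (Suc k))) - zpoly (monom (of_nat (Suc k) * c0) k)
      - zpoly (monom (of_nat (Suc (Suc k)) * c1) (Suc k)))"
    unfolding pderiv_monom_mult_p by (intro ham_in_lie_diff monoms)
  then have "ham_in_lie (zpoly (smult (1 / (of_nat (Suc (Suc (Suc k))) * c2))
      (monom (of_nat (Suc (Suc (Suc k))) * c2) (Suc (Suc k)))))"
    by (intro ham_in_lie_zpoly_smult) (simp add: zpoly_add)
  then show ?case
    using k1 c2_nonzero by (simp add: smult_monom del: of_nat_Suc)
qed

lemma ham_in_lie_zpoly: "ham_in_lie (zpoly q)"
proof -
  have "ham_in_lie (zpoly (\<Sum>i\<le>degree q. monom (coeff q i) i))"
    using ham_in_lie_zpoly_monom ham_in_lie_zpoly_smult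
    by (intro ham_in_lie_zpoly_sum) (metis smult_monom mult.right_neutral)
  then show ?thesis by (simp only: poly_as_sum_of_monoms)
qed

lemma ham_in_lie_zpoly_mult_tmonom:
  assumes "a \<noteq> 0" "ham_in_lie (tmonom a c)"
  shows "ham_in_lie (tmonom a (d * c))"
proof -
  obtain B where B: "pderiv B = smult (1 / of_int a) d"
    using exists_antiderivative by blast
  have "ham_in_lie (poisson (zpoly B) (tmonom a c))"
    using ham_in_lie_poisson[OF ham_in_lie_zpoly assms(2)] .
  moreover have "poisson (zpoly B) (tmonom a c) = tmonom a (d * c)"
    using assms(1) by (simp add: poisson_zpoly_left euler_tmonom zpoly_mult_tmonom B of_int_poly)
  ultimately show ?thesis by simp
qed

lemma ham_in_lie_tmonom:
  assumes "tmonom a b \<in> model"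
  shows "ham_in_lie (tmonom a b)"
  using assms
proof (cases rule: tmonom_in_model_cases)
  case (1 q)
  show ?thesis
  proof (cases "nat a")
    case 0
    then show ?thesis using 1 ham_in_lie_zpoly by simp
  next
    case (Suc k)
    have "tmonom a b = tmonom (int (Suc k)) (q * 1)"
      unfolding 1 Suc tvar_power by (simp add: zpoly_mult_tmonom mult.commute)
    then show ?thesis
      using ham_in_lie_zpoly_mult_tmonom[OF _ ham_in_lie_tvar_power[of k, unfolded tvar_power], of q] by simp
  qed
next
  case (2 q)
  show ?thesis
  proof (cases "nat (- a)")
    case 0
    then show ?thesis using 2 ham_in_lie_zpoly by simp
  next
    case (Suc k)
    have "tmonom a b = tmonom (- int (Suc k)) (q * p ^ Suc k)"
      unfolding 2 Suc yvar_power by (simp add: zpoly_mult_tmonom mult.commute)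
    then show ?thesis
      using ham_in_lie_zpoly_mult_tmonom[OF _ ham_in_lie_yvar_power[of k, unfolded yvar_power], of q] by simp
  qed
qed

lemma ham_in_lie_model: "h \<in> model \<Longrightarrow> ham_in_lie h"
  by (induct h rule: model_induct) (simp_all add: ham_in_lie_add ham_in_lie_tmonom ham_in_lie_const[of 0, simplified])

end


section \<open>Every Hamiltonian field is a sum of two brackets\<close>

text \<open>Since \<open>1 / 0 = 0\<close>, \<open>euler_inv\<close> drops the coefficient of \<open>t\<^sup>0\<close>.\<close>

definition euler_inv :: "'a::field_char_0 lpoly \<Rightarrow> 'a lpoly" where
  "euler_inv f = Abs_poly_mapping (\<lambda>n. smult (1 / of_int n) (tcoeff f n))"

lemma tcoeff_euler_inv: "tcoeff (euler_inv f) n = smult (1 / of_int n) (tcoeff f n)"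
proof -
  have "finite {n. smult (1 / of_int n) (tcoeff f n) \<noteq> 0}"
    by (rule finite_subset[OF _ finite_keys[of f]]) (auto simp: in_keys_iff)
  then show ?thesis unfolding euler_inv_def by simp
qed

lemma euler_euler_inv: "euler (euler_inv f) = f - zpoly (tcoeff f 0)"
  by (rule poly_mapping_eqI)
     (simp add: tcoeff_euler tcoeff_euler_inv lookup_minus zpoly_def lookup_single of_int_poly when_def)

lemma pderiv_degree_le_1:
  assumes "degree (r :: 'a::idom poly) \<le> 1"
  shows "pderiv r = [:coeff r 1:]"
proof (rule poly_eqI)
  fix n
  show "coeff (pderiv r) n = coeff [:coeff r 1:] n"
  proof (cases n)
    case (Suc m)
    then have "coeff r (Suc n) = 0"
      using assms by (intro coeff_eq_0) simp
    then show ?thesis using Suc by (simp add: coeff_pderiv)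
  qed (simp add: coeff_pderiv)
qed

context quadratic_surface
begin

lemma model_euler_inv: "f \<in> model \<Longrightarrow> euler_inv f \<in> model"
  by (auto simp: model_def tcoeff_euler_inv intro: dvd_smult)

lemma poisson_minus_tvar_yvar_zpoly: "poisson (- tvar) (yvar * zpoly q) = zpoly (pderiv (p * q))"
proof -
  have "poisson (- tvar) (yvar * zpoly q) = (tvar * zderiv yvar) * zpoly q + (tvar * yvar) * zpoly (pderiv q)"
    by (simp add: poisson_uminus_left poisson_tvar_left zderiv_mult zderiv_zpoly algebra_simps)
  also have "\<dots> = zpoly (pderiv (p * q))"
    by (simp add: tvar_zderiv_yvar tvar_yvar pderiv_mult algebra_simps flip: zpoly_mult zpoly_add)
  finally show ?thesis .
qed

lemma zpoly_eq_poisson_tvar_plus_const: "\<exists>q c. zpoly r = poisson (- tvar) (yvar * zpoly q) + zpoly [:c:]"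
proof -
  obtain R where R: "pderiv R = r"
    using exists_antiderivative by blast
  have "degree (R mod p) \<le> 1"
    using degree_mod_less'[of p R] degree_p by (cases "R mod p = 0") (auto simp: p_nonzero)
  then have "pderiv (R mod p) = [:coeff (R mod p) 1:]"
    by (rule pderiv_degree_le_1)
  moreover have "p * (R div p) = R - R mod p"
    by (simp add: minus_mod_eq_mult_div)
  ultimately have "pderiv (p * (R div p)) = r - [:coeff (R mod p) 1:]"
    by (simp add: pderiv_diff R)
  then have "zpoly r = poisson (- tvar) (yvar * zpoly (R div p)) + zpoly [:coeff (R mod p) 1:]"
    by (simp add: poisson_minus_tvar_yvar_zpoly flip: zpoly_add)
  then show ?thesis by blast
qed

lemma model_decomposition:
  assumes "h \<in> model"
  obtains g q c where "g \<in> model" "h = poisson zvar g + poisson (- tvar) (yvar * zpoly q) + zpoly [:c:]"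
proof -
  obtain q c where "zpoly (tcoeff h 0) = poisson (- tvar) (yvar * zpoly q) + zpoly [:c:]"
    using zpoly_eq_poisson_tvar_plus_const by blast
  moreover have "poisson zvar (euler_inv h) = h - zpoly (tcoeff h 0)"
    by (simp add: poisson_def euler_euler_inv)
  ultimately show ?thesis
    using that model_euler_inv[OF assms] by (metis add.assoc diff_add_cancel)
qed

lemma bracket_width_le_lie_lnd: "bracket_width_le (lie_lnd p) 2"
  unfolding bracket_width_le_def
proof
  fix a assume "a \<in> derived (lie_lnd p)"
  then obtain h where h: "h \<in> model" "a = ham h"
    using derived_lie_lnd_ham by blast
  obtain g q c where g: "g \<in> model" and h_eq: "h = poisson zvar g + poisson (- tvar) (yvar * zpoly q) + zpoly [:c:]"
    using model_decomposition[OF h(1)] by blast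
  have in_model: "zvar \<in> model" "g \<in> model" "- tvar \<in> model" "yvar * zpoly q \<in> model"
    using g by (simp_all add: model_zvar model_uminus model_tvar model_mult model_yvar model_zpoly)
  define B where "B = (\<lambda>i::nat. if i = 0 then ham zvar else ham (- tvar))"
  define C where "C = (\<lambda>i::nat. if i = 0 then ham g else ham (yvar * zpoly q))"
  have BC: "\<forall>i<2. B i \<in> lie_lnd p \<and> C i \<in> lie_lnd p"
    using in_model ham_in_lie_model by (auto simp: B_def C_def ham_in_lie_def)
  have "foldr (\<lambda>i acc. vf_add (vf_bracket (B i) (C i)) acc) [0..<2] vf_zero
      = vf_add (vf_bracket (ham zvar) (ham g)) (vf_bracket (ham (- tvar)) (ham (yvar * zpoly q)))"
    by (simp add: upt_rec B_def C_def vf_add_def vf_zero_def)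
  also have "\<dots> = ham (poisson zvar g + poisson (- tvar) (yvar * zpoly q))"
    using in_model by (simp add: vf_bracket_ham vf_add_ham model_poisson)
  also have "\<dots> = a"
    by (simp only: h(2) h_eq ham_add_const)
  finally have "a = foldr (\<lambda>i acc. vf_add (vf_bracket (B i) (C i)) acc) [0..<2] vf_zero"
    by (rule sym)
  with BC show "\<exists>B C. (\<forall>i<2. B i \<in> lie_lnd p \<and> C i \<in> lie_lnd p) \<and>
      a = foldr (\<lambda>i acc. vf_add (vf_bracket (B i) (C i)) acc) [0..<2] vf_zero"
    by blast
qed

end

theorem proposition4p10:
  fixes p :: "'a::field_char_0 poly"
  assumes "alg_closed TYPE('a)"
    and "degree p = 2"
    and "rsquarefree p"
  shows "bracket_width_le (lie_lnd p) 2"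
proof -
  interpret quadratic_surface p
    using assms(2,3) by unfold_locales
  show ?thesis
    by (rule bracket_width_le_lie_lnd)
qed

end
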